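(* Let $G$ be a finite group and $H \le G$ a subgroup with $H \neq \{e\}$. Let $X$ be the set of right cosets of $H$ in $G$, on which $G$ acts by right multiplication; for $g \in G$ let $\mathrm{fix}_X(g)$ be the number of points of $X$ fixed by $g$, and let $r_X(G)$ be the number of orbits of $H$ on $X$. Then (i) $D_H > \frac{1}{|G|}\sum_{h \in H,\, h \neq e} \mathrm{fix}_X(h)$; (ii) $D_H > r_X(G)/|X| - 1/|H|$.
   Context: For a finite group $G$, let $\mathrm{Irr}(G)$ be its set of complex irreducible characters and $d_\chi=\chi(e)$. For $H \le G$ let $D_H = \frac{1}{|G|}\sum_{\chi \in \mathrm{Irr}(G)} d_\chi \big|\sum_{h \in H, h \neq e}\chi(h)\big|$, the $L_1$ distance between the distributions $P_H(\chi)=\frac{d_\chi}{|G|}\sum_{h\in H}\chi(h)$ and $P_{\{e\}}$ on $\mathrm{Irr}(G)$. *)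

theory Defs
  imports "HOL-Algebra.Coset" "Jordan_Normal_Form.Matrix"
begin

definition is_rep :: "('a, 'b) monoid_scheme \<Rightarrow> nat \<Rightarrow> ('a \<Rightarrow> complex mat) \<Rightarrow> bool" where
  "is_rep G n \<rho> \<longleftrightarrow>
     (\<forall>g \<in> carrier G. \<rho> g \<in> carrier_mat n n) \<and>
     \<rho> \<one>\<^bsub>G\<^esub> = 1\<^sub>m n \<and>
     (\<forall>g \<in> carrier G. \<forall>h \<in> carrier G. \<rho> (g \<otimes>\<^bsub>G\<^esub> h) = \<rho> g * \<rho> h)"

definition is_subspace :: "nat \<Rightarrow> complex vec set \<Rightarrow> bool" where
  "is_subspace n W \<longleftrightarrow> W \<subseteq> carrier_vec n \<and> 0\<^sub>v n \<in> W \<and>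
     (\<forall>v \<in> W. \<forall>w \<in> W. v + w \<in> W) \<and> (\<forall>c. \<forall>v \<in> W. c \<cdot>\<^sub>v v \<in> W)"

definition irred_rep :: "('a, 'b) monoid_scheme \<Rightarrow> nat \<Rightarrow> ('a \<Rightarrow> complex mat) \<Rightarrow> bool" where
  "irred_rep G n \<rho> \<longleftrightarrow> is_rep G n \<rho> \<and> n > 0 \<and>
     (\<forall>W. is_subspace n W \<and> (\<forall>g \<in> carrier G. \<forall>w \<in> W. \<rho> g *\<^sub>v w \<in> W)
          \<longrightarrow> W = {0\<^sub>v n} \<or> W = carrier_vec n)"

definition mat_trace :: "complex mat \<Rightarrow> complex" where
  "mat_trace A = (\<Sum>i < dim_row A. A $$ (i, i))"

definition character :: "('a, 'b) monoid_scheme \<Rightarrow> ('a \<Rightarrow> complex mat) \<Rightarrow> 'a \<Rightarrow> complex" where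
  "character G \<rho> = (\<lambda>g. if g \<in> carrier G then mat_trace (\<rho> g) else 0)"

definition Irr :: "('a, 'b) monoid_scheme \<Rightarrow> ('a \<Rightarrow> complex) set" where
  "Irr G = {\<chi>. \<exists>n \<rho>. irred_rep G n \<rho> \<and> \<chi> = character G \<rho>}"

definition D :: "('a, 'b) monoid_scheme \<Rightarrow> 'a set \<Rightarrow> real" where
  "D G H = (1 / real (card (carrier G))) *
     (\<Sum>\<chi> \<in> Irr G. cmod (\<chi> \<one>\<^bsub>G\<^esub>) * cmod (\<Sum>h \<in> H - {\<one>\<^bsub>G\<^esub>}. \<chi> h))"

definition fixX :: "('a, 'b) monoid_scheme \<Rightarrow> 'a set \<Rightarrow> 'a \<Rightarrow> nat" where
  "fixX G H g = card {x \<in> rcosets\<^bsub>G\<^esub> H. x #>\<^bsub>G\<^esub> g = x}"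

definition rX :: "('a, 'b) monoid_scheme \<Rightarrow> 'a set \<Rightarrow> nat" where
  "rX G H = card ((\<lambda>x. {x #>\<^bsub>G\<^esub> h | h. h \<in> H}) ` (rcosets\<^bsub>G\<^esub> H))"

end

theory Submission
  imports Defs "Jordan_Normal_Form.Schur_Decomposition" "HOL-Algebra.Group_Action"
    "HOL-Algebra.Multiplicative_Group"
begin

text \<open>
  Let \<open>m \<chi>\<close> be the multiplicity of \<open>\<chi> \<in> Irr G\<close> in the permutation character \<open>fixX G H\<close>.
  By Frobenius reciprocity \<open>\<Sum>h\<in>H. \<chi> h = |H| m \<chi>\<close>, so \<open>s \<chi> = \<Sum>h\<in>H - {e}. \<chi> h = |H| m \<chi> - \<chi> e\<close>
  is real, and \<open>m \<chi> \<le> \<chi> e\<close> because \<open>|\<chi> h| \<le> \<chi> e\<close>. Hence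
  \<open>\<Sum>h\<in>H - {e}. fixX G H h = \<Sum>\<^sub>\<chi> m \<chi> s \<chi> \<le> \<Sum>\<^sub>\<chi> \<chi> e |s \<chi>| = |G| D G H\<close>.
  The inequality is strict: column orthogonality \<open>\<Sum>\<^sub>\<chi> \<chi> e \<chi> h = 0\<close> for \<open>h \<noteq> e\<close> gives
  \<open>\<Sum>\<^sub>\<chi> \<chi> e s \<chi> = 0\<close>, while \<open>s \<chi> = |H| - 1 > 0\<close> for the trivial character; so some \<open>s \<chi>\<close>
  is negative, and for it \<open>m \<chi> s \<chi> \<le> 0 < \<chi> e |s \<chi>|\<close>. Part (ii) is part (i) rewritten with
  Burnside's lemma \<open>rX G H |H| = \<Sum>h\<in>H. fixX G H h\<close>, \<open>fixX G H e = |X|\<close> and \<open>|X| |H| = |G|\<close>.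
\<close>

section \<open>Matrices\<close>

lemma index_mult_mat_sum:
  assumes "A \<in> carrier_mat m l" "B \<in> carrier_mat l n" "i < m" "j < n"
  shows "(A * B) $$ (i,j) = (\<Sum>k<l. A $$ (i,k) * B $$ (k,j))"
  using assms by (auto simp: scalar_prod_def lessThan_atLeast0 intro!: sum.cong)

lemma index_mult_mat_vec_sum:
  assumes "A \<in> carrier_mat m l" "v \<in> carrier_vec l" "i < m"
  shows "(A *\<^sub>v v) $ i = (\<Sum>k<l. A $$ (i,k) * v $ k)"
  using assms by (auto simp: scalar_prod_def lessThan_atLeast0 intro!: sum.cong)

lemma mat_trace_mult_comm:
  assumes A: "A \<in> carrier_mat m n" and B: "B \<in> carrier_mat n m"
  shows "mat_trace (A * B) = mat_trace (B * A)"
proof -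
  have "mat_trace (A * B) = (\<Sum>i<m. \<Sum>k<n. A $$ (i,k) * B $$ (k,i))"
    unfolding mat_trace_def using A B
    by (intro sum.cong) (auto simp: index_mult_mat_sum[OF A B] simp del: index_mult_mat(1))
  also have "\<dots> = (\<Sum>k<n. \<Sum>i<m. B $$ (k,i) * A $$ (i,k))"
    by (subst sum.swap) (simp add: mult.commute)
  also have "\<dots> = mat_trace (B * A)"
    unfolding mat_trace_def using A B
    by (intro sum.cong) (auto simp: index_mult_mat_sum[OF B A] simp del: index_mult_mat(1))
  finally show ?thesis .
qed

lemma mat_trace_one [simp]: "mat_trace (1\<^sub>m n) = of_nat n"
  unfolding mat_trace_def by simp

lemma mat_trace_intertwined:
  assumes T: "T \<in> carrier_mat m n" and B: "B \<in> carrier_mat n m" and TB: "T * B = 1\<^sub>m m"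
    and BT: "B * T = 1\<^sub>m n" and X: "X \<in> carrier_mat m m" and Y: "Y \<in> carrier_mat n n"
    and XT: "X * T = T * Y"
  shows "mat_trace X = mat_trace Y"
proof -
  have "mat_trace X = mat_trace (X * (T * B))" using TB X by simp
  also have "X * (T * B) = (T * Y) * B" using XT by (simp add: assoc_mult_mat[OF X T B, symmetric])
  also have "mat_trace \<dots> = mat_trace (B * (T * Y))"
    using T B Y by (intro mat_trace_mult_comm[of _ m n]) auto
  also have "B * (T * Y) = Y" using BT Y by (simp add: assoc_mult_mat[OF B T Y, symmetric])
  finally show ?thesis .
qed

lemma mult_mat_zero_vec [simp]:
  "A \<in> carrier_mat m n \<Longrightarrow> A *\<^sub>v 0\<^sub>v n = (0\<^sub>v m :: complex vec)"
  by (intro eq_vecI) auto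

lemma mult_unit_vec_eq_col:
  fixes A :: "complex mat"
  assumes A: "A \<in> carrier_mat m n" and j: "j < n"
  shows "A *\<^sub>v unit_vec n j = col A j"
proof (rule eq_vecI)
  fix i assume "i < dim_vec (col A j)"
  hence i: "i < m" using A by auto
  have "(A *\<^sub>v unit_vec n j) $ i = (\<Sum>k<n. A $$ (i,k) * (if k = j then 1 else 0))"
    using index_mult_mat_vec_sum[OF A _ i, of "unit_vec n j"] by (simp add: unit_vec_def)
  also have "\<dots> = A $$ (i,j)" using j by (simp add: if_distrib cong: if_cong)
  finally show "(A *\<^sub>v unit_vec n j) $ i = col A j $ i" using i j A by auto
qed (use A in auto)

lemma mat_eq_zero_if_unit_vecs_to_zero:
  fixes T :: "complex mat"
  assumes T: "T \<in> carrier_mat m n" and z: "\<And>j. j < n \<Longrightarrow> T *\<^sub>v unit_vec n j = 0\<^sub>v m"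
  shows "T = 0\<^sub>m m n"
proof (rule mat_col_eqI)
  fix j assume "j < dim_col (0\<^sub>m m n :: complex mat)"
  hence j: "j < n" by simp
  have "col T j = 0\<^sub>v m" using z[OF j] mult_unit_vec_eq_col[OF T j] by simp
  then show "col T j = col (0\<^sub>m m n) j" using j by (auto simp: col_def)
qed (use T in auto)

lemma mult_mat_vec_cancel:
  fixes A :: "complex mat"
  assumes A: "A \<in> carrier_mat m n"
    and inj: "\<And>v. v \<in> carrier_vec n \<Longrightarrow> A *\<^sub>v v = 0\<^sub>v m \<Longrightarrow> v = 0\<^sub>v n"
    and v: "v \<in> carrier_vec n" and w: "w \<in> carrier_vec n" and eq: "A *\<^sub>v v = A *\<^sub>v w"
  shows "v = w"
proof -
  have "A *\<^sub>v (v - w) = A *\<^sub>v v - A *\<^sub>v w"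
    using A v w by (simp add: mult_minus_distrib_mat_vec)
  also have "\<dots> = 0\<^sub>v m" using eq A w by auto
  finally have "v - w = 0\<^sub>v n" using inj v w by auto
  then have "v $ i = w $ i" if "i < n" for i
  proof -
    have "(v - w) $ i = v $ i - w $ i" using that w by auto
    moreover have "(v - w) $ i = 0" using \<open>v - w = 0\<^sub>v n\<close> that by simp
    ultimately show ?thesis by simp
  qed
  then show ?thesis using v w by (intro eq_vecI) auto
qed

lemma bij_mult_mat_vec_imp_inverse:
  fixes A :: "complex mat"
  assumes A: "A \<in> carrier_mat m n"
    and inj: "\<And>v. v \<in> carrier_vec n \<Longrightarrow> A *\<^sub>v v = 0\<^sub>v m \<Longrightarrow> v = 0\<^sub>v n"
    and surj: "\<And>u. u \<in> carrier_vec m \<Longrightarrow> \<exists>v\<in>carrier_vec n. A *\<^sub>v v = u"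
  obtains B where "B \<in> carrier_mat n m" "A * B = 1\<^sub>m m" "B * A = 1\<^sub>m n"
proof -
  define V where "V j = (SOME v. v \<in> carrier_vec n \<and> A *\<^sub>v v = unit_vec m j)" for j
  have V: "V j \<in> carrier_vec n \<and> A *\<^sub>v V j = unit_vec m j" for j
    unfolding V_def by (rule someI_ex) (use surj[of "unit_vec m j"] in auto)
  define B where "B = mat_of_cols n (map V [0..<m])"
  have Bc: "B \<in> carrier_mat n m" unfolding B_def by auto
  have colB: "j < m \<Longrightarrow> col B j = V j" for j unfolding B_def using V
    by (subst col_mat_of_cols) auto
  have AB: "A * B = 1\<^sub>m m"
  proof (rule mat_col_eqI)
    fix j assume "j < dim_col (1\<^sub>m m)"
    hence j: "j < m" by simp
    have "col (A * B) j = A *\<^sub>v col B j" using A Bc j by simp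
    also have "\<dots> = unit_vec m j" using colB[OF j] V by simp
    finally show "col (A * B) j = col (1\<^sub>m m) j" using j by simp
  qed (use A Bc in auto)
  have BA: "B * A = 1\<^sub>m n"
  proof (rule mat_col_eqI)
    fix j assume "j < dim_col (1\<^sub>m n)"
    hence j: "j < n" by simp
    have "A *\<^sub>v col (B * A) j = A *\<^sub>v (B *\<^sub>v col A j)" using A Bc j by simp
    also have "\<dots> = (A * B) *\<^sub>v col A j" using A Bc j
      by (metis assoc_mult_mat_vec col_carrier_vec)
    also have "\<dots> = A *\<^sub>v unit_vec n j" using AB A j by (simp add: mult_unit_vec_eq_col)
    finally have "col (B * A) j = unit_vec n j"
      using mult_mat_vec_cancel[OF A inj] A Bc j by auto
    then show "col (B * A) j = col (1\<^sub>m n) j" using j by simp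
  qed (use A Bc in auto)
  show ?thesis using that AB BA Bc by blast
qed

lemma is_subspace_kernel:
  assumes "T \<in> carrier_mat m n"
  shows "is_subspace n {v \<in> carrier_vec n. T *\<^sub>v v = 0\<^sub>v m}"
  unfolding is_subspace_def using assms by (auto simp: mult_add_distrib_mat_vec mult_mat_vec)

lemma is_subspace_image:
  assumes T: "T \<in> carrier_mat m n"
  shows "is_subspace m {T *\<^sub>v v | v. v \<in> carrier_vec n}"
  unfolding is_subspace_def
proof (intro conjI ballI allI)
  show "0\<^sub>v m \<in> {T *\<^sub>v v |v. v \<in> carrier_vec n}"
    using T by (auto intro!: exI[of _ "0\<^sub>v n"])
next
  fix v w assume "v \<in> {T *\<^sub>v v |v. v \<in> carrier_vec n}" "w \<in> {T *\<^sub>v v |v. v \<in> carrier_vec n}"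
  then obtain a b where "v = T *\<^sub>v a" "w = T *\<^sub>v b" "a \<in> carrier_vec n" "b \<in> carrier_vec n" by auto
  then show "v + w \<in> {T *\<^sub>v v |v. v \<in> carrier_vec n}" using T
    by (auto simp: mult_add_distrib_mat_vec intro!: exI[of _ "a + b"])
next
  fix c v assume "v \<in> {T *\<^sub>v v |v. v \<in> carrier_vec n}"
  then obtain a where "v = T *\<^sub>v a" "a \<in> carrier_vec n" by auto
  then show "c \<cdot>\<^sub>v v \<in> {T *\<^sub>v v |v. v \<in> carrier_vec n}" using T
    by (auto simp: mult_mat_vec intro!: exI[of _ "c \<cdot>\<^sub>v a"])
qed (use T in auto)

lemma is_subspace_eigenspace:
  assumes "A \<in> carrier_mat n n"
  shows "is_subspace n {v \<in> carrier_vec n. A *\<^sub>v v = a \<cdot>\<^sub>v v}"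
  unfolding is_subspace_def using assms
  by (auto simp: mult_add_distrib_mat_vec mult_mat_vec smult_add_distrib_vec smult_smult_assoc mult.commute)

lemma complex_eigenvector_exists:
  fixes A :: "complex mat"
  assumes A: "A \<in> carrier_mat n n" and n: "n > 0"
  obtains a v where "v \<in> carrier_vec n" "v \<noteq> 0\<^sub>v n" "A *\<^sub>v v = a \<cdot>\<^sub>v v"
proof -
  obtain as where cp: "char_poly A = (\<Prod>a\<leftarrow>as. [:- a, 1:])" and len: "length as = n"
    using char_poly_factorized[OF A] by blast
  then obtain a rest where as: "as = a # rest" using n by (cases as) auto
  have "poly (char_poly A) a = 0" unfolding cp as by simp
  hence "eigenvalue A a" using eigenvalue_root_char_poly[OF A] by simp
  then show ?thesis using that A unfolding eigenvalue_def eigenvector_def by auto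
qed

section \<open>Representations and characters\<close>

lemma is_rep_carrier: "is_rep G n \<rho> \<Longrightarrow> g \<in> carrier G \<Longrightarrow> \<rho> g \<in> carrier_mat n n"
  unfolding is_rep_def by auto

lemma is_rep_one: "is_rep G n \<rho> \<Longrightarrow> \<rho> \<one>\<^bsub>G\<^esub> = 1\<^sub>m n"
  unfolding is_rep_def by auto

lemma is_rep_mult:
  "is_rep G n \<rho> \<Longrightarrow> g \<in> carrier G \<Longrightarrow> h \<in> carrier G \<Longrightarrow> \<rho> (g \<otimes>\<^bsub>G\<^esub> h) = \<rho> g * \<rho> h"
  unfolding is_rep_def by auto

lemma irred_rep_is_rep: "irred_rep G n \<rho> \<Longrightarrow> is_rep G n \<rho>"
  unfolding irred_rep_def by auto

lemma irred_rep_invariant_subspace: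
  assumes "irred_rep G n \<rho>" "is_subspace n W" "\<And>g w. g \<in> carrier G \<Longrightarrow> w \<in> W \<Longrightarrow> \<rho> g *\<^sub>v w \<in> W"
  shows "W = {0\<^sub>v n} \<or> W = carrier_vec n"
  using assms unfolding irred_rep_def by blast

lemma character_eq_sum_diag:
  assumes "is_rep G n \<rho>" "g \<in> carrier G"
  shows "character G \<rho> g = (\<Sum>i<n. \<rho> g $$ (i,i))"
  using is_rep_carrier[OF assms] assms unfolding character_def mat_trace_def by auto

lemma character_outside: "g \<notin> carrier G \<Longrightarrow> character G \<rho> g = 0"
  unfolding character_def by simp

lemma trivial_rep_irred: "irred_rep G 1 (\<lambda>_. 1\<^sub>m 1)"
  unfolding irred_rep_def
proof (intro conjI allI impI)
  fix W assume W: "is_subspace 1 W \<and> (\<forall>g\<in>carrier G. \<forall>w\<in>W. 1\<^sub>m 1 *\<^sub>v w \<in> W)"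
  show "W = {0\<^sub>v 1} \<or> W = carrier_vec 1"
  proof (cases "W = {0\<^sub>v 1}")
    case False
    have "0\<^sub>v 1 \<in> W" and Wc: "W \<subseteq> carrier_vec 1" using W unfolding is_subspace_def by auto
    then obtain w where w: "w \<in> W" "w \<noteq> 0\<^sub>v 1" using False by blast
    have wc: "w \<in> carrier_vec 1" using w Wc by auto
    have w0: "w $ 0 \<noteq> 0"
      using w wc by (metis carrier_vecD eq_vecI index_zero_vec less_one)
    have "v \<in> W" if v: "v \<in> carrier_vec 1" for v
    proof -
      have "v = (v $ 0 / w $ 0) \<cdot>\<^sub>v w" using v wc w0 by (intro eq_vecI) auto
      then show ?thesis using W w unfolding is_subspace_def by metis
    qed
    then show ?thesis using Wc by auto
  qed simp
qed (simp_all add: is_rep_def)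

lemma trivial_character_in_Irr: "character G (\<lambda>_. 1\<^sub>m 1) \<in> Irr G"
  unfolding Irr_def using trivial_rep_irred by blast

context group
begin

lemma is_rep_inv_mult:
  assumes "is_rep G n \<rho>" "g \<in> carrier G"
  shows "\<rho> (inv g) * \<rho> g = 1\<^sub>m n"
  using assms is_rep_mult[of G n \<rho> "inv g" g] is_rep_one[of G n \<rho>] by simp

lemma is_rep_pow:
  assumes r: "is_rep G n \<rho>" and g: "g \<in> carrier G"
  shows "\<rho> (g [^] k) = \<rho> g ^\<^sub>m k"
proof (induction k)
  case 0 then show ?case using is_rep_one[OF r] is_rep_carrier[OF r g] by simp
next
  case (Suc k) then show ?case using is_rep_mult[OF r] g by simp
qed

lemma character_one: "is_rep G n \<rho> \<Longrightarrow> character G \<rho> \<one> = of_nat n"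
  unfolding character_def by (simp add: is_rep_one)

lemma character_conj:
  assumes r: "is_rep G n \<rho>" and x: "x \<in> carrier G" and g: "g \<in> carrier G"
  shows "character G \<rho> (x \<otimes> g \<otimes> inv x) = character G \<rho> g"
proof -
  have c: "\<rho> x \<in> carrier_mat n n" "\<rho> g \<in> carrier_mat n n" "\<rho> (inv x) \<in> carrier_mat n n"
    using is_rep_carrier[OF r] x g by auto
  have "\<rho> (x \<otimes> g \<otimes> inv x) = \<rho> x * (\<rho> g * \<rho> (inv x))"
    using is_rep_mult[OF r] x g c by (simp add: assoc_mult_mat[of _ n n _ n _ n])
  then have "mat_trace (\<rho> (x \<otimes> g \<otimes> inv x)) = mat_trace ((\<rho> g * \<rho> (inv x)) * \<rho> x)"
    using c by (metis mat_trace_mult_comm mult_carrier_mat)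
  also have "\<dots> = mat_trace (\<rho> g)"
    using is_rep_inv_mult[OF r x] c by (simp add: assoc_mult_mat[of _ n n _ n _ n])
  finally show ?thesis unfolding character_def using x g by simp
qed

lemma IrrE:
  assumes "\<chi> \<in> Irr G"
  obtains n \<rho> where "irred_rep G n \<rho>" "is_rep G n \<rho>" "n > 0" "\<chi> = character G \<rho>"
  using assms unfolding Irr_def irred_rep_def by blast

lemma Irr_conj: "\<chi> \<in> Irr G \<Longrightarrow> x \<in> carrier G \<Longrightarrow> g \<in> carrier G \<Longrightarrow> \<chi> (x \<otimes> g \<otimes> inv x) = \<chi> g"
  by (elim IrrE) (simp add: character_conj)

lemma Irr_one_real: "\<chi> \<in> Irr G \<Longrightarrow> of_real (cmod (\<chi> \<one>)) = \<chi> \<one>"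
  by (elim IrrE) (simp add: character_one)

lemma Irr_one_ge: "\<chi> \<in> Irr G \<Longrightarrow> cmod (\<chi> \<one>) \<ge> 1"
  by (elim IrrE) (simp add: character_one)

lemma Irr_outside: "\<chi> \<in> Irr G \<Longrightarrow> g \<notin> carrier G \<Longrightarrow> \<chi> g = 0"
  by (elim IrrE) (simp add: character_outside)

end

section \<open>Schur's lemma and the orthogonality relations\<close>

lemma intertwiner_kernel_trivial:
  assumes s: "irred_rep G n \<sigma>" and r: "is_rep G m \<rho>" and T: "T \<in> carrier_mat m n"
    and inter: "\<And>g. g \<in> carrier G \<Longrightarrow> \<rho> g * T = T * \<sigma> g" and nz: "T \<noteq> 0\<^sub>m m n"
    and v: "v \<in> carrier_vec n" "T *\<^sub>v v = 0\<^sub>v m"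
  shows "v = 0\<^sub>v n"
proof -
  define K where "K = {v \<in> carrier_vec n. T *\<^sub>v v = 0\<^sub>v m}"
  have "\<sigma> g *\<^sub>v w \<in> K" if g: "g \<in> carrier G" and w: "w \<in> K" for g w
  proof -
    have c: "\<sigma> g \<in> carrier_mat n n" "\<rho> g \<in> carrier_mat m m"
      using is_rep_carrier[OF irred_rep_is_rep[OF s] g] is_rep_carrier[OF r g] .
    have "T *\<^sub>v (\<sigma> g *\<^sub>v w) = (T * \<sigma> g) *\<^sub>v w" using c T w K_def by auto
    also have "\<dots> = \<rho> g *\<^sub>v (T *\<^sub>v w)" using c T w K_def inter[OF g, symmetric] by auto
    also have "\<dots> = 0\<^sub>v m" using w K_def c by auto
    finally show ?thesis using w c unfolding K_def by auto
  qed
  moreover have "K \<noteq> carrier_vec n"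
  proof
    assume "K = carrier_vec n"
    hence "T *\<^sub>v unit_vec n j = 0\<^sub>v m" if "j < n" for j
      using unit_vec_carrier[of n j] unfolding K_def by blast
    with nz show False using mat_eq_zero_if_unit_vecs_to_zero[OF T] by blast
  qed
  ultimately have "K = {0\<^sub>v n}"
    using irred_rep_invariant_subspace[OF s is_subspace_kernel[OF T]] unfolding K_def by blast
  then show ?thesis using v unfolding K_def by blast
qed

lemma intertwiner_surjective:
  assumes r: "irred_rep G m \<rho>" and s: "is_rep G n \<sigma>" and T: "T \<in> carrier_mat m n"
    and inter: "\<And>g. g \<in> carrier G \<Longrightarrow> \<rho> g * T = T * \<sigma> g" and nz: "T \<noteq> 0\<^sub>m m n"
    and u: "u \<in> carrier_vec m"
  shows "\<exists>v\<in>carrier_vec n. T *\<^sub>v v = u"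
proof -
  define I where "I = {T *\<^sub>v v | v. v \<in> carrier_vec n}"
  have "\<rho> g *\<^sub>v w \<in> I" if g: "g \<in> carrier G" and w: "w \<in> I" for g w
  proof -
    have c: "\<sigma> g \<in> carrier_mat n n" "\<rho> g \<in> carrier_mat m m"
      using is_rep_carrier[OF s g] is_rep_carrier[OF irred_rep_is_rep[OF r] g] .
    obtain a where a: "w = T *\<^sub>v a" "a \<in> carrier_vec n" using w I_def by auto
    have "\<rho> g *\<^sub>v w = (\<rho> g * T) *\<^sub>v a" using c T a by auto
    also have "\<dots> = T *\<^sub>v (\<sigma> g *\<^sub>v a)" using c T a inter[OF g] by auto
    finally show ?thesis using a c unfolding I_def by auto
  qed
  moreover have "I \<noteq> {0\<^sub>v m}"
  proof
    assume "I = {0\<^sub>v m}"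
    hence "T *\<^sub>v unit_vec n j = 0\<^sub>v m" if "j < n" for j
      using unit_vec_carrier[of n j] unfolding I_def by blast
    with nz show False using mat_eq_zero_if_unit_vecs_to_zero[OF T] by blast
  qed
  ultimately have "I = carrier_vec m"
    using irred_rep_invariant_subspace[OF r is_subspace_image[OF T]] unfolding I_def by blast
  then have "u \<in> I" using u by simp
  then show ?thesis unfolding I_def by blast
qed

lemma intertwiner_nonzero_imp_character_eq:
  assumes r: "irred_rep G m \<rho>" and s: "irred_rep G n \<sigma>" and T: "T \<in> carrier_mat m n"
    and inter: "\<And>g. g \<in> carrier G \<Longrightarrow> \<rho> g * T = T * \<sigma> g" and nz: "T \<noteq> 0\<^sub>m m n"
  shows "character G \<rho> = character G \<sigma>"
proof -
  note reps = irred_rep_is_rep[OF r] irred_rep_is_rep[OF s]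
  obtain B where B: "B \<in> carrier_mat n m" "T * B = 1\<^sub>m m" "B * T = 1\<^sub>m n"
    using bij_mult_mat_vec_imp_inverse[OF T intertwiner_kernel_trivial[OF s reps(1) T inter nz]
        intertwiner_surjective[OF r reps(2) T inter nz]] by blast
  have "mat_trace (\<rho> g) = mat_trace (\<sigma> g)" if "g \<in> carrier G" for g
    using mat_trace_intertwined[OF T B] inter[OF that] is_rep_carrier[OF _ that] reps by blast
  then show ?thesis unfolding character_def by auto
qed

lemma commuting_matrix_is_scalar:
  assumes r: "irred_rep G n \<rho>" and A: "A \<in> carrier_mat n n"
    and comm: "\<And>g. g \<in> carrier G \<Longrightarrow> \<rho> g * A = A * \<rho> g"
  obtains c where "A = c \<cdot>\<^sub>m 1\<^sub>m n"
proof -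
  have n: "n > 0" using r unfolding irred_rep_def by auto
  obtain a v where v: "v \<in> carrier_vec n" "v \<noteq> 0\<^sub>v n" "A *\<^sub>v v = a \<cdot>\<^sub>v v"
    using complex_eigenvector_exists[OF A n] by blast
  define K where "K = {v \<in> carrier_vec n. A *\<^sub>v v = a \<cdot>\<^sub>v v}"
  have "\<rho> g *\<^sub>v w \<in> K" if g: "g \<in> carrier G" and w: "w \<in> K" for g w
  proof -
    have c: "\<rho> g \<in> carrier_mat n n" using is_rep_carrier[OF irred_rep_is_rep[OF r] g] .
    have "A *\<^sub>v (\<rho> g *\<^sub>v w) = (A * \<rho> g) *\<^sub>v w" using c A w K_def by auto
    also have "\<dots> = \<rho> g *\<^sub>v (A *\<^sub>v w)" using c A w K_def comm[OF g, symmetric] by auto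
    also have "\<dots> = a \<cdot>\<^sub>v (\<rho> g *\<^sub>v w)" using w K_def c by (auto simp: mult_mat_vec)
    finally show ?thesis using w c unfolding K_def by auto
  qed
  moreover have "K \<noteq> {0\<^sub>v n}" using v unfolding K_def by blast
  ultimately have K: "K = carrier_vec n"
    using irred_rep_invariant_subspace[OF r is_subspace_eigenspace[OF A]] unfolding K_def by blast
  have "A = a \<cdot>\<^sub>m 1\<^sub>m n"
  proof (rule mat_col_eqI)
    fix j assume "j < dim_col (a \<cdot>\<^sub>m 1\<^sub>m n)"
    hence j: "j < n" by simp
    have "col A j = A *\<^sub>v unit_vec n j" using mult_unit_vec_eq_col[OF A j] by simp
    also have "\<dots> = a \<cdot>\<^sub>v unit_vec n j" using K unit_vec_carrier[of n j] unfolding K_def by blast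
    also have "\<dots> = col (a \<cdot>\<^sub>m 1\<^sub>m n) j" using j by (auto simp: col_def unit_vec_def)
    finally show "col A j = col (a \<cdot>\<^sub>m 1\<^sub>m n) j" .
  qed (use A in auto)
  then show ?thesis using that by blast
qed

text \<open>The matrix \<open>\<Sum>\<^sub>g \<rho>(g) E\<^sub>a\<^sub>b \<sigma>(g\<inverse>)\<close>, where \<open>E\<^sub>a\<^sub>b\<close> is the matrix unit at \<open>(a,b)\<close>.\<close>
definition averaged_intertwiner ::
    "('a, 'b) monoid_scheme \<Rightarrow> nat \<Rightarrow> nat \<Rightarrow> ('a \<Rightarrow> complex mat) \<Rightarrow> ('a \<Rightarrow> complex mat) \<Rightarrow>
     nat \<Rightarrow> nat \<Rightarrow> complex mat" where
  "averaged_intertwiner G m n \<rho> \<sigma> a b =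
     mat m n (\<lambda>(i,j). \<Sum>g\<in>carrier G. \<rho> g $$ (i,a) * \<sigma> (inv\<^bsub>G\<^esub> g) $$ (b,j))"

lemma averaged_intertwiner_carrier: "averaged_intertwiner G m n \<rho> \<sigma> a b \<in> carrier_mat m n"
  unfolding averaged_intertwiner_def by simp

context group
begin

lemma sum_carrier_mult_left:
  assumes "h \<in> carrier G"
  shows "(\<Sum>g\<in>carrier G. F g) = (\<Sum>g\<in>carrier G. F (h \<otimes> g))"
proof -
  have "inj_on (\<lambda>g. h \<otimes> g) (carrier G)" using assms by (auto simp: inj_on_def)
  moreover have "(\<lambda>g. h \<otimes> g) ` carrier G = carrier G" using assms surj_const_mult by blast
  ultimately show ?thesis using sum.reindex[of "\<lambda>g. h \<otimes> g" "carrier G" F] by simp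
qed

lemma averaged_intertwiner_intertwines:
  assumes r: "is_rep G m \<rho>" and s: "is_rep G n \<sigma>" and h: "h \<in> carrier G"
    and a: "a < m" and b: "b < n"
  shows "\<rho> h * averaged_intertwiner G m n \<rho> \<sigma> a b = averaged_intertwiner G m n \<rho> \<sigma> a b * \<sigma> h"
proof (rule eq_matI)
  let ?T = "averaged_intertwiner G m n \<rho> \<sigma> a b"
  have T: "?T \<in> carrier_mat m n" by (rule averaged_intertwiner_carrier)
  have rh: "\<rho> h \<in> carrier_mat m m" and sh: "\<sigma> h \<in> carrier_mat n n"
    using is_rep_carrier[OF r h] is_rep_carrier[OF s h] .
  fix i j assume "i < dim_row (?T * \<sigma> h)" "j < dim_col (?T * \<sigma> h)"
  hence i: "i < m" and j: "j < n" using T sh by auto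
  have "(\<rho> h * ?T) $$ (i,j) = (\<Sum>k<m. \<rho> h $$ (i,k) * (\<Sum>g\<in>carrier G. \<rho> g $$ (k,a) * \<sigma> (inv g) $$ (b,j)))"
    using index_mult_mat_sum[OF rh T i j] i j unfolding averaged_intertwiner_def by simp
  also have "\<dots> = (\<Sum>g\<in>carrier G. (\<Sum>k<m. \<rho> h $$ (i,k) * \<rho> g $$ (k,a)) * \<sigma> (inv g) $$ (b,j))"
    by (simp add: sum_distrib_left sum_distrib_right mult.assoc) (rule sum.swap)
  also have "\<dots> = (\<Sum>g\<in>carrier G. \<rho> (h \<otimes> g) $$ (i,a) * \<sigma> (inv g) $$ (b,j))"
    using is_rep_mult[OF r h] index_mult_mat_sum[OF rh is_rep_carrier[OF r] i a] by simp
  also have "\<dots> = (\<Sum>g\<in>carrier G. \<rho> (h \<otimes> g) $$ (i,a) * \<sigma> (inv (h \<otimes> g) \<otimes> h) $$ (b,j))"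
    using h by (intro sum.cong refl) (simp add: inv_mult_group m_assoc)
  also have "\<dots> = (\<Sum>g\<in>carrier G. \<rho> g $$ (i,a) * \<sigma> (inv g \<otimes> h) $$ (b,j))"
    by (rule sum_carrier_mult_left[OF h, symmetric])
  also have "\<dots> = (\<Sum>g\<in>carrier G. \<Sum>k<n. \<rho> g $$ (i,a) * \<sigma> (inv g) $$ (b,k) * \<sigma> h $$ (k,j))"
    using is_rep_mult[OF s _ h] index_mult_mat_sum[OF is_rep_carrier[OF s] sh b j]
    by (simp add: sum_distrib_left mult.assoc)
  also have "\<dots> = (\<Sum>k<n. (\<Sum>g\<in>carrier G. \<rho> g $$ (i,a) * \<sigma> (inv g) $$ (b,k)) * \<sigma> h $$ (k,j))"
    by (subst sum.swap) (simp add: sum_distrib_right)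
  also have "\<dots> = (?T * \<sigma> h) $$ (i,j)"
    using index_mult_mat_sum[OF T sh i j] i j unfolding averaged_intertwiner_def by simp
  finally show "(\<rho> h * ?T) $$ (i,j) = (?T * \<sigma> h) $$ (i,j)" .
qed (use is_rep_carrier[OF r h] is_rep_carrier[OF s h] in \<open>auto simp: averaged_intertwiner_def\<close>)

lemma sum_character_mult_inv_eq:
  assumes r: "is_rep G m \<rho>" and s: "is_rep G n \<sigma>"
  shows "(\<Sum>g\<in>carrier G. character G \<rho> g * character G \<sigma> (inv g)) =
    (\<Sum>a<m. \<Sum>b<n. averaged_intertwiner G m n \<rho> \<sigma> a b $$ (a,b))"
proof -
  have "(\<Sum>g\<in>carrier G. character G \<rho> g * character G \<sigma> (inv g)) =
     (\<Sum>g\<in>carrier G. \<Sum>a<m. \<Sum>b<n. \<rho> g $$ (a,a) * \<sigma> (inv g) $$ (b,b))"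
    by (intro sum.cong refl)
      (simp add: character_eq_sum_diag[OF r] character_eq_sum_diag[OF s] sum_product)
  also have "\<dots> = (\<Sum>a<m. \<Sum>b<n. \<Sum>g\<in>carrier G. \<rho> g $$ (a,a) * \<sigma> (inv g) $$ (b,b))"
    by (subst sum.swap) (intro sum.cong refl, rule sum.swap)
  also have "\<dots> = (\<Sum>a<m. \<Sum>b<n. averaged_intertwiner G m n \<rho> \<sigma> a b $$ (a,b))"
    unfolding averaged_intertwiner_def by (intro sum.cong refl) simp
  finally show ?thesis .
qed

lemma irred_character_orthogonal:
  assumes r: "irred_rep G m \<rho>" and s: "irred_rep G n \<sigma>"
    and ne: "character G \<rho> \<noteq> character G \<sigma>"
  shows "(\<Sum>g\<in>carrier G. character G \<rho> g * character G \<sigma> (inv g)) = 0"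
proof -
  note reps = irred_rep_is_rep[OF r] irred_rep_is_rep[OF s]
  have "averaged_intertwiner G m n \<rho> \<sigma> a b = 0\<^sub>m m n" if "a < m" "b < n" for a b
    using intertwiner_nonzero_imp_character_eq[OF r s averaged_intertwiner_carrier]
      averaged_intertwiner_intertwines[OF reps _ that] ne by blast
  then show ?thesis unfolding sum_character_mult_inv_eq[OF reps] by simp
qed

lemma irred_character_norm:
  assumes r: "irred_rep G m \<rho>"
  shows "(\<Sum>g\<in>carrier G. character G \<rho> g * character G \<rho> (inv g)) = of_nat (card (carrier G))"
proof -
  have rr: "is_rep G m \<rho>" and m: "m > 0" using r unfolding irred_rep_def by auto
  let ?T = "averaged_intertwiner G m m \<rho> \<rho>"
  have scalar: "?T a b = (if a = b then of_nat (card (carrier G)) / of_nat m else 0) \<cdot>\<^sub>m 1\<^sub>m m"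
    if a: "a < m" and b: "b < m" for a b
  proof -
    obtain c where c: "?T a b = c \<cdot>\<^sub>m 1\<^sub>m m"
      using commuting_matrix_is_scalar[OF r averaged_intertwiner_carrier]
        averaged_intertwiner_intertwines[OF rr rr _ a b] by metis
    have "mat_trace (?T a b) = (\<Sum>i<m. \<Sum>g\<in>carrier G. \<rho> (inv g) $$ (b,i) * \<rho> g $$ (i,a))"
      unfolding mat_trace_def averaged_intertwiner_def by (simp add: mult.commute)
    also have "\<dots> = (\<Sum>g\<in>carrier G. (\<rho> (inv g) * \<rho> g) $$ (b,a))"
      by (subst sum.swap) (intro sum.cong refl,
          simp add: index_mult_mat_sum[OF is_rep_carrier[OF rr] is_rep_carrier[OF rr] b a])
    also have "\<dots> = (if a = b then of_nat (card (carrier G)) else 0)"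
      using a b by (simp add: is_rep_inv_mult[OF rr])
    finally have "mat_trace (?T a b) = (if a = b then of_nat (card (carrier G)) else 0)" .
    moreover have "mat_trace (?T a b) = c * of_nat m" unfolding c mat_trace_def by simp
    ultimately show ?thesis using c m by (cases "a = b") (simp_all add: field_simps)
  qed
  have "(\<Sum>g\<in>carrier G. character G \<rho> g * character G \<rho> (inv g)) =
      (\<Sum>a<m. \<Sum>b<m. if a = b then of_nat (card (carrier G)) / of_nat m else 0)"
    unfolding sum_character_mult_inv_eq[OF rr rr] by (intro sum.cong refl) (simp add: scalar)
  also have "\<dots> = of_nat (card (carrier G))" using m by simp
  finally show ?thesis .
qed

lemma Irr_orthogonality_inv:
  assumes "\<chi> \<in> Irr G" "\<psi> \<in> Irr G"
  shows "(\<Sum>g\<in>carrier G. \<chi> g * \<psi> (inv g)) = (if \<chi> = \<psi> then of_nat (card (carrier G)) else 0)"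
  using assms unfolding Irr_def
  by (auto simp: irred_character_norm irred_character_orthogonal)

end

section \<open>Characters of finite groups\<close>

lemma upper_triangular_mult:
  assumes B: "B \<in> carrier_mat n n" and C: "C \<in> carrier_mat n n"
    and uB: "upper_triangular B" and uC: "upper_triangular C"
  shows "upper_triangular (B * C)" "\<And>i. i < n \<Longrightarrow> (B * C) $$ (i,i) = B $$ (i,i) * C $$ (i,i)"
proof -
  have prod0: "B $$ (i,k) * C $$ (k,j) = 0" if "i < n" "k < n" "j < i \<or> (j = i \<and> k \<noteq> i)" for i j k
    using that uB uC B C by (cases "k < i") (auto simp: upper_triangularD)
  show "upper_triangular (B * C)"
  proof (rule upper_triangularI)
    fix i j assume "j < i" "i < dim_row (B * C)"
    then have "(B * C) $$ (i,j) = (\<Sum>k<n. B $$ (i,k) * C $$ (k,j))"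
      using B C by (intro index_mult_mat_sum[OF B C]) auto
    then show "(B * C) $$ (i,j) = 0" using B \<open>j < i\<close> \<open>i < dim_row (B * C)\<close> prod0 by simp
  qed
  fix i assume i: "i < n"
  have "(B * C) $$ (i,i) = (\<Sum>k<n. B $$ (i,k) * C $$ (k,i))" by (rule index_mult_mat_sum[OF B C i i])
  also have "\<dots> = (\<Sum>k<n. if k = i then B $$ (i,i) * C $$ (i,i) else 0)"
    using prod0 i by (intro sum.cong) auto
  finally show "(B * C) $$ (i,i) = B $$ (i,i) * C $$ (i,i)" using i by simp
qed

lemma upper_triangular_pow:
  assumes B: "B \<in> carrier_mat n n" and uB: "upper_triangular B"
  shows "upper_triangular (B ^\<^sub>m k) \<and> (\<forall>i<n. (B ^\<^sub>m k) $$ (i,i) = (B $$ (i,i)) ^ k)"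
proof (induction k)
  case 0
  then show ?case using B by auto
next
  case (Suc k)
  have Bk: "B ^\<^sub>m k \<in> carrier_mat n n" using B by simp
  have "(B ^\<^sub>m Suc k) $$ (i,i) = (B $$ (i,i)) ^ Suc k" if "i < n" for i
    using upper_triangular_mult(2)[OF Bk B _ uB that] Suc that by (simp add: power_commutes)
  then show ?case using upper_triangular_mult(1)[OF Bk B _ uB] Suc by simp
qed

lemma mat_trace_similar:
  assumes "similar_mat_wit A B P Q"
  shows "mat_trace A = mat_trace B"
proof -
  obtain n where n: "A \<in> carrier_mat n n" "B \<in> carrier_mat n n" "P \<in> carrier_mat n n"
      "Q \<in> carrier_mat n n" "Q * P = 1\<^sub>m n" "A = P * B * Q"
    using similar_mat_witD[OF refl assms] by blast
  have "mat_trace A = mat_trace (P * (B * Q))" using n by (simp add: assoc_mult_mat[of _ n n _ n _ n])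
  also have "\<dots> = mat_trace ((B * Q) * P)" using n by (intro mat_trace_mult_comm[of _ n n]) auto
  also have "\<dots> = mat_trace B" using n by (simp add: assoc_mult_mat[of _ n n _ n _ n])
  finally show ?thesis .
qed

lemma norm_root_of_unity:
  fixes z :: complex
  assumes "z ^ N = 1" "N > 0"
  shows "cmod z = 1"
proof -
  have "cmod z ^ N = 1" using assms by (metis norm_one norm_power)
  then show ?thesis using assms by (metis norm_ge_zero power_eq_1_iff zero_less_iff_neq_zero)
qed

lemma root_of_unity_pow_pred_eq_cnj:
  fixes z :: complex
  assumes "z ^ N = 1" "N > 0"
  shows "z ^ (N - 1) = cnj z"
proof -
  have z: "z * cnj z = 1" using norm_root_of_unity[OF assms] complex_norm_square[of z] by simp
  have "z ^ (N - 1) = z ^ (N - 1) * (z * cnj z)" using z by simp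
  also have "\<dots> = z ^ N * cnj z" using assms(2) by (simp add: power_eq_if mult.assoc)
  finally show ?thesis using assms by simp
qed

locale finite_group = group +
  assumes finite_carrier: "finite (carrier G)"
begin

lemma card_carrier_pos: "card (carrier G) > 0"
  using finite_carrier card_gt_0_iff by blast

text \<open>The \<open>d i\<close> are the eigenvalues of \<open>\<rho> g\<close>, read off the diagonal of a Schur triangularisation.\<close>
lemma character_pow_eq_sum_roots_of_unity:
  assumes r: "is_rep G n \<rho>" and g: "g \<in> carrier G"
  obtains d where "\<And>i. i < n \<Longrightarrow> d i ^ card (carrier G) = 1"
    "\<And>k. character G \<rho> (g [^] k) = (\<Sum>i<n. d i ^ k)"
proof -
  let ?A = "\<rho> g"
  have A: "?A \<in> carrier_mat n n" using is_rep_carrier[OF r g] .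
  obtain es where "char_poly ?A = (\<Prod>a\<leftarrow>es. [:- a, 1:])" using char_poly_factorized[OF A] by blast
  then obtain B where B: "B \<in> carrier_mat n n" "upper_triangular B" "similar_mat ?A B"
    using schur_decomposition_exists[OF A] by blast
  then obtain P Q where w: "similar_mat_wit ?A B P Q" unfolding similar_mat_def by blast
  have PQ: "P \<in> carrier_mat n n" "Q \<in> carrier_mat n n" "Q * P = 1\<^sub>m n"
    using similar_mat_witD2[OF A w] by auto
  have char: "character G \<rho> (g [^] k) = (\<Sum>i<n. (B $$ (i,i)) ^ k)" for k
  proof -
    have "character G \<rho> (g [^] k) = mat_trace (?A ^\<^sub>m k)"
      unfolding character_def using g is_rep_pow[OF r g] by simp
    also have "\<dots> = mat_trace (B ^\<^sub>m k)" by (rule mat_trace_similar[OF similar_mat_wit_pow[OF w]])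
    also have "\<dots> = (\<Sum>i<n. (B $$ (i,i)) ^ k)"
      unfolding mat_trace_def using upper_triangular_pow[OF B(1,2), of k] B by simp
    finally show ?thesis .
  qed
  have "?A ^\<^sub>m card (carrier G) = 1\<^sub>m n"
    using is_rep_pow[OF r g, of "card (carrier G)", symmetric] is_rep_one[OF r]
      pow_order_eq_1[OF g, unfolded Coset.order_def] by simp
  then have "B ^\<^sub>m card (carrier G) = 1\<^sub>m n"
    using similar_mat_wit_pow_id[OF similar_mat_wit_sym[OF w], of "card (carrier G)"] PQ by simp
  then have "(B $$ (i,i)) ^ card (carrier G) = 1" if "i < n" for i
    using upper_triangular_pow[OF B(1,2), of "card (carrier G)"] that by auto
  then show ?thesis using that[of "\<lambda>i. B $$ (i,i)"] char by blast
qed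

lemma character_inv:
  assumes r: "is_rep G n \<rho>" and g: "g \<in> carrier G"
  shows "character G \<rho> (inv g) = cnj (character G \<rho> g)"
proof -
  obtain d where d: "\<And>i. i < n \<Longrightarrow> d i ^ card (carrier G) = 1"
      "\<And>k. character G \<rho> (g [^] k) = (\<Sum>i<n. d i ^ k)"
    using character_pow_eq_sum_roots_of_unity[OF r g] by blast
  have "g [^] (card (carrier G) - 1) \<otimes> g = g [^] card (carrier G)"
    using card_carrier_pos g by (metis Suc_diff_1 nat_pow_Suc)
  then have "inv g = g [^] (card (carrier G) - 1)"
    using g pow_order_eq_1[OF g, unfolded Coset.order_def] by (metis inv_equality nat_pow_closed)
  then have "character G \<rho> (inv g) = (\<Sum>i<n. d i ^ (card (carrier G) - 1))" using d(2) by simp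
  also have "\<dots> = cnj (\<Sum>i<n. d i ^ 1)"
    using d(1) root_of_unity_pow_pred_eq_cnj card_carrier_pos by simp
  also have "\<dots> = cnj (character G \<rho> g)" using d(2)[of 1] g by simp
  finally show ?thesis .
qed

lemma norm_character_le:
  assumes r: "is_rep G n \<rho>"
  shows "cmod (character G \<rho> g) \<le> n"
proof (cases "g \<in> carrier G")
  case g: True
  obtain d where d: "\<And>i. i < n \<Longrightarrow> d i ^ card (carrier G) = 1"
      "\<And>k. character G \<rho> (g [^] k) = (\<Sum>i<n. d i ^ k)"
    using character_pow_eq_sum_roots_of_unity[OF r g] by blast
  have "cmod (d i) = 1" if "i < n" for i
    using norm_root_of_unity[OF d(1)[OF that] card_carrier_pos] .
  then have "cmod (\<Sum>i<n. d i) \<le> n"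
    using norm_sum[of d "{..<n}"] by simp
  then show ?thesis using d(2)[of 1] g by simp
qed (simp add: character_outside)

lemma Irr_inv: "\<chi> \<in> Irr G \<Longrightarrow> g \<in> carrier G \<Longrightarrow> \<chi> (inv g) = cnj (\<chi> g)"
  by (elim IrrE) (simp add: character_inv)

lemma norm_Irr_le: "\<chi> \<in> Irr G \<Longrightarrow> cmod (\<chi> g) \<le> cmod (\<chi> \<one>)"
  by (elim IrrE) (simp add: norm_character_le character_one)

lemma Irr_orthogonality:
  assumes "\<chi> \<in> Irr G" "\<psi> \<in> Irr G"
  shows "(\<Sum>g\<in>carrier G. \<chi> g * cnj (\<psi> g)) = (if \<chi> = \<psi> then of_nat (card (carrier G)) else 0)"
  using Irr_orthogonality_inv[OF assms] Irr_inv[OF assms(2)] by simp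

lemma sum_norm_square_Irr_combination:
  fixes a :: "('a \<Rightarrow> complex) \<Rightarrow> real"
  assumes F: "F \<subseteq> Irr G" "finite F"
  shows "(\<Sum>g\<in>carrier G. (cmod (\<Sum>\<chi>\<in>F. a \<chi> * \<chi> g))\<^sup>2) = card (carrier G) * (\<Sum>\<chi>\<in>F. (a \<chi>)\<^sup>2)"
proof -
  have "complex_of_real (\<Sum>g\<in>carrier G. (cmod (\<Sum>\<chi>\<in>F. a \<chi> * \<chi> g))\<^sup>2) =
      (\<Sum>g\<in>carrier G. (\<Sum>\<chi>\<in>F. a \<chi> * \<chi> g) * cnj (\<Sum>\<psi>\<in>F. a \<psi> * \<psi> g))"
    by (simp only: of_real_sum complex_norm_square)
  also have "\<dots> = (\<Sum>g\<in>carrier G. \<Sum>\<chi>\<in>F. \<Sum>\<psi>\<in>F. of_real (a \<chi> * a \<psi>) * (\<chi> g * cnj (\<psi> g)))"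
    by (simp add: sum_product mult_ac)
  also have "\<dots> = (\<Sum>\<chi>\<in>F. \<Sum>g\<in>carrier G. \<Sum>\<psi>\<in>F. of_real (a \<chi> * a \<psi>) * (\<chi> g * cnj (\<psi> g)))"
    by (rule sum.swap)
  also have "\<dots> = (\<Sum>\<chi>\<in>F. \<Sum>\<psi>\<in>F. of_real (a \<chi> * a \<psi>) * (\<Sum>g\<in>carrier G. \<chi> g * cnj (\<psi> g)))"
    by (intro sum.cong refl) (simp only: sum.swap[of _ _ F] sum_distrib_left)
  also have "\<dots> = (\<Sum>\<chi>\<in>F. of_real (a \<chi> * a \<chi>) * of_nat (card (carrier G)))"
  proof (rule sum.cong[OF refl])
    fix \<chi> assume \<chi>: "\<chi> \<in> F"
    have "(\<Sum>\<psi>\<in>F. of_real (a \<chi> * a \<psi>) * (\<Sum>g\<in>carrier G. \<chi> g * cnj (\<psi> g))) =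
        (\<Sum>\<psi>\<in>F. if \<chi> = \<psi> then of_real (a \<chi> * a \<chi>) * of_nat (card (carrier G)) else 0)"
      using F \<chi> by (intro sum.cong refl) (auto simp: Irr_orthogonality subset_iff)
    then show "(\<Sum>\<psi>\<in>F. of_real (a \<chi> * a \<psi>) * (\<Sum>g\<in>carrier G. \<chi> g * cnj (\<psi> g))) =
        of_real (a \<chi> * a \<chi>) * of_nat (card (carrier G))"
      using F \<chi> by simp
  qed
  also have "\<dots> = complex_of_real (card (carrier G) * (\<Sum>\<chi>\<in>F. (a \<chi>)\<^sup>2))"
    by (simp add: sum_distrib_left power2_eq_square mult.commute)
  finally show ?thesis by (simp only: of_real_eq_iff)
qed

lemma card_Irr_subset_le:
  assumes F: "F \<subseteq> Irr G" "finite F"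
  shows "card F \<le> card (carrier G)"
proof -
  text \<open>For \<open>u = \<Sum>\<^sub>\<chi> \<chi>(1) \<chi>\<close> and \<open>S = \<Sum>\<^sub>\<chi> \<chi>(1)\<^sup>2 \<ge> |F|\<close>, orthogonality gives
    \<open>S\<^sup>2 = |u(1)|\<^sup>2 \<le> \<Sum>\<^sub>g |u(g)|\<^sup>2 = |G| S\<close>.\<close>
  define d where "d \<chi> = cmod (\<chi> \<one>)" for \<chi> :: "'a \<Rightarrow> complex"
  define u where "u g = (\<Sum>\<chi>\<in>F. d \<chi> * \<chi> g)" for g
  define S where "S = (\<Sum>\<chi>\<in>F. (d \<chi>)\<^sup>2)"
  have deg: "\<chi> \<one> = of_real (d \<chi>)" "d \<chi> \<ge> 1" if "\<chi> \<in> F" for \<chi>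
  proof -
    have "\<chi> \<in> Irr G" using that F(1) by blast
    then show "\<chi> \<one> = of_real (d \<chi>)" "d \<chi> \<ge> 1"
      using Irr_one_real Irr_one_ge unfolding d_def by presburger+
  qed
  have "u \<one> = (\<Sum>\<chi>\<in>F. of_real ((d \<chi>)\<^sup>2))"
    unfolding u_def by (intro sum.cong refl) (simp add: deg(1) power2_eq_square)
  then have "u \<one> = of_real S" unfolding S_def by simp
  moreover have "(cmod (u \<one>))\<^sup>2 \<le> (\<Sum>g\<in>carrier G. (cmod (u g))\<^sup>2)"
    by (rule member_le_sum) (use finite_carrier in auto)
  moreover have "(\<Sum>g\<in>carrier G. (cmod (u g))\<^sup>2) = card (carrier G) * S"
    unfolding u_def S_def by (rule sum_norm_square_Irr_combination[OF F])
  ultimately have "S * S \<le> card (carrier G) * S"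
    by (simp add: power2_eq_square)
  moreover have "real (card F) \<le> S"
  proof -
    have "real (card F) = (\<Sum>\<chi>\<in>F. 1)" by simp
    also have "\<dots> \<le> S" unfolding S_def by (intro sum_mono) (use deg in \<open>auto intro: one_le_power\<close>)
    finally show ?thesis .
  qed
  ultimately have "real (card F) \<le> card (carrier G)"
    by (cases "S > 0") (auto simp: mult_le_cancel_right_pos)
  then show ?thesis by simp
qed

lemma finite_Irr: "finite (Irr G)"
proof (rule ccontr)
  assume "infinite (Irr G)"
  then obtain F where F: "F \<subseteq> Irr G" "finite F" "card F = Suc (card (carrier G))"
    using infinite_arbitrarily_large by blast
  then show False using card_Irr_subset_le[OF F(1,2)] by simp
qed

end

section \<open>Decomposition into irreducible characters\<close>

definition cols_independent :: "nat \<Rightarrow> complex vec list \<Rightarrow> bool" where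
  "cols_independent n ws \<longleftrightarrow> set ws \<subseteq> carrier_vec n \<and>
     (\<forall>c\<in>carrier_vec (length ws). mat_of_cols n ws *\<^sub>v c = 0\<^sub>v n \<longrightarrow> c = 0\<^sub>v (length ws))"

lemma injective_mat_dim_le:
  fixes A :: "complex mat"
  assumes A: "A \<in> carrier_mat m k"
    and inj: "\<And>v. v \<in> carrier_vec k \<Longrightarrow> A *\<^sub>v v = 0\<^sub>v m \<Longrightarrow> v = 0\<^sub>v k"
  shows "k \<le> m"
proof (rule ccontr)
  assume "\<not> k \<le> m"
  hence km: "m < k" by simp
  define A' where "A' = mat\<^sub>r k k (\<lambda>i. if i = k - 1 then 0\<^sub>v k else vec k (\<lambda>j. if i < m then A $$ (i,j) else 0))"
  have A'c: "A' \<in> carrier_mat k k" unfolding A'_def by simp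
  text \<open>Pad \<open>A\<close> with zero rows to a singular square matrix; its kernel is killed by \<open>A\<close> as well.\<close>
  have "det A' = 0" unfolding A'_def using km by (intro det_row_0) auto
  then obtain v where v: "v \<in> carrier_vec k" "v \<noteq> 0\<^sub>v k" "A' *\<^sub>v v = 0\<^sub>v k"
    using det_0_iff_vec_prod_zero[OF A'c] by blast
  have "A *\<^sub>v v = 0\<^sub>v m"
  proof (rule eq_vecI)
    fix i assume "i < dim_vec (0\<^sub>v m :: complex vec)"
    hence i: "i < m" by simp
    have "(A *\<^sub>v v) $ i = (A' *\<^sub>v v) $ i"
      using i km A v(1) unfolding A'_def
      by (auto simp: index_mult_mat_vec_sum[OF A v(1)] scalar_prod_def lessThan_atLeast0 intro!: sum.cong)
    then show "(A *\<^sub>v v) $ i = 0\<^sub>v m $ i" using v i km by simp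
  qed (use A v in auto)
  with inj v show False by blast
qed

lemma cols_independent_length_le: "cols_independent n ws \<Longrightarrow> length ws \<le> n"
  unfolding cols_independent_def by (rule injective_mat_dim_le[of "mat_of_cols n ws"]) auto

lemma cols_independent_Nil: "cols_independent n []"
  unfolding cols_independent_def by auto

lemma mult_mat_of_cols_snoc:
  fixes w :: "complex vec"
  assumes ws: "set ws \<subseteq> carrier_vec n" and w: "w \<in> carrier_vec n"
    and c: "c \<in> carrier_vec (Suc (length ws))" and i: "i < n"
  shows "(mat_of_cols n (ws @ [w]) *\<^sub>v c) $ i =
    (mat_of_cols n ws *\<^sub>v vec (length ws) (\<lambda>j. c $ j)) $ i + c $ (length ws) * w $ i"
proof -
  let ?L = "length ws"
  have "(mat_of_cols n (ws @ [w]) *\<^sub>v c) $ i = (\<Sum>j<Suc ?L. (ws @ [w]) ! j $ i * c $ j)"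
    using index_mult_mat_vec_sum[of "mat_of_cols n (ws @ [w])" n "Suc ?L" c i] c i
    by (simp add: mat_of_cols_def)
  also have "\<dots> = (\<Sum>j<?L. (ws @ [w]) ! j $ i * c $ j) + w $ i * c $ ?L"
    by simp
  also have "(\<Sum>j<?L. (ws @ [w]) ! j $ i * c $ j) = (\<Sum>j<?L. ws ! j $ i * c $ j)"
    by (intro sum.cong refl) (simp add: nth_append)
  also have "(\<Sum>j<?L. ws ! j $ i * c $ j) = (mat_of_cols n ws *\<^sub>v vec ?L (\<lambda>j. c $ j)) $ i"
    using index_mult_mat_vec_sum[of "mat_of_cols n ws" n ?L "vec ?L (\<lambda>j. c $ j)" i] i
    by (simp add: mat_of_cols_def)
  finally show ?thesis by (simp add: mult.commute)
qed

lemma cols_independent_extend_maximal: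
  assumes S: "S \<subseteq> carrier_vec n" and ws: "cols_independent n ws" "set ws \<subseteq> S"
  obtains us where "cols_independent n (ws @ us)" "set us \<subseteq> S"
    "\<And>w. w \<in> S \<Longrightarrow> \<not> cols_independent n (ws @ us @ [w])"
proof -
  have "\<exists>us. cols_independent n (ws @ us) \<and> set us \<subseteq> S \<and> (\<forall>w\<in>S. \<not> cols_independent n (ws @ us @ [w]))"
    using ws
  proof (induction "n - length ws" arbitrary: ws rule: less_induct)
    case less
    show ?case
    proof (cases "\<exists>w\<in>S. cols_independent n (ws @ [w])")
      case False
      then show ?thesis using less.prems by (intro exI[of _ "[]"]) auto
    next
      case True
      then obtain w where w: "w \<in> S" "cols_independent n (ws @ [w])" by blast
      have lt: "n - length (ws @ [w]) < n - length ws"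
        using cols_independent_length_le[OF w(2)] by simp
      obtain us where "cols_independent n ((ws @ [w]) @ us)" "set us \<subseteq> S"
          "\<forall>x\<in>S. \<not> cols_independent n ((ws @ [w]) @ us @ [x])"
        using less.hyps[OF lt w(2)] less.prems w by auto
      then show ?thesis using w by (intro exI[of _ "w # us"]) auto
    qed
  qed
  then show ?thesis using that by blast
qed

lemma maximal_cols_independent_spans:
  assumes ws: "cols_independent n ws" and w: "w \<in> carrier_vec n"
    and max: "\<not> cols_independent n (ws @ [w])"
  shows "\<exists>c\<in>carrier_vec (length ws). mat_of_cols n ws *\<^sub>v c = w"
proof -
  let ?L = "length ws"
  let ?M = "mat_of_cols n ws"
  have wsc: "set ws \<subseteq> carrier_vec n" using ws unfolding cols_independent_def by auto
  obtain c' where c': "c' \<in> carrier_vec (Suc ?L)" "mat_of_cols n (ws @ [w]) *\<^sub>v c' = 0\<^sub>v n"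
      "c' \<noteq> 0\<^sub>v (Suc ?L)"
    using max wsc w unfolding cols_independent_def by auto
  define c where "c = vec ?L (\<lambda>j. c' $ j)"
  define a where "a = c' $ ?L"
  have eq: "(?M *\<^sub>v c) $ i = - a * w $ i" if i: "i < n" for i
    using mult_mat_of_cols_snoc[OF wsc w c'(1) i] c'(2) i unfolding c_def a_def
    by (simp add: eq_neg_iff_add_eq_0)
  have a0: "a \<noteq> 0"
  proof
    assume a: "a = 0"
    have "?M *\<^sub>v c = 0\<^sub>v n" using eq a by (intro eq_vecI) auto
    hence "c = 0\<^sub>v ?L" using ws unfolding cols_independent_def c_def by auto
    hence "c' = 0\<^sub>v (Suc ?L)"
    proof (intro eq_vecI)
      fix i assume "c = 0\<^sub>v ?L" "i < dim_vec (0\<^sub>v (Suc ?L) :: complex vec)"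
      then show "c' $ i = 0\<^sub>v (Suc ?L) $ i" using a unfolding c_def a_def
        by (cases "i = ?L") (auto dest!: arg_cong[of _ _ "\<lambda>v. v $ i"])
    qed (use c' in auto)
    with c' show False by simp
  qed
  have "?M *\<^sub>v ((- 1 / a) \<cdot>\<^sub>v c) = w"
  proof (rule eq_vecI)
    fix i assume "i < dim_vec w"
    hence i: "i < n" using w by simp
    have "(?M *\<^sub>v ((- 1 / a) \<cdot>\<^sub>v c)) $ i = (- 1 / a) * (?M *\<^sub>v c) $ i"
      using mult_mat_vec[of ?M n ?L c "- 1 / a"] i by (simp add: c_def)
    then show "(?M *\<^sub>v ((- 1 / a) \<cdot>\<^sub>v c)) $ i = w $ i" using eq[OF i] a0 by simp
  qed (use w in auto)
  moreover have "(- 1 / a) \<cdot>\<^sub>v c \<in> carrier_vec ?L" unfolding c_def by simp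
  ultimately show ?thesis by blast
qed

lemma is_subspace_mult_mat_of_cols:
  assumes W: "is_subspace n W" and ws: "set ws \<subseteq> W" and c: "c \<in> carrier_vec (length ws)"
  shows "mat_of_cols n ws *\<^sub>v c \<in> W"
  using ws c
proof (induction ws arbitrary: c rule: rev_induct)
  case Nil
  have "mat_of_cols n [] *\<^sub>v c = 0\<^sub>v n"
    using Nil by (intro eq_vecI) (auto simp: mat_of_cols_def scalar_prod_def)
  then show ?case using W unfolding is_subspace_def by auto
next
  case (snoc w ws)
  have Wc: "W \<subseteq> carrier_vec n" using W unfolding is_subspace_def by auto
  have wsc: "set ws \<subseteq> carrier_vec n" and wc: "w \<in> carrier_vec n" using snoc.prems Wc by auto
  define c0 where "c0 = vec (length ws) (\<lambda>j. c $ j)"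
  have "mat_of_cols n (ws @ [w]) *\<^sub>v c = mat_of_cols n ws *\<^sub>v c0 + (c $ length ws) \<cdot>\<^sub>v w"
    using mult_mat_of_cols_snoc[OF wsc wc] snoc.prems wc unfolding c0_def by (intro eq_vecI) auto
  moreover have "mat_of_cols n ws *\<^sub>v c0 \<in> W" using snoc unfolding c0_def by auto
  moreover have "(c $ length ws) \<cdot>\<^sub>v w \<in> W" using W snoc.prems unfolding is_subspace_def by auto
  ultimately show ?case using W unfolding is_subspace_def by auto
qed


lemma cols_independent_spanning_inverse:
  assumes L: "cols_independent n L"
    and span: "\<And>v. v \<in> carrier_vec n \<Longrightarrow> \<exists>c\<in>carrier_vec (length L). mat_of_cols n L *\<^sub>v c = v"
  obtains B where "length L = n" "B \<in> carrier_mat n n"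
    "mat_of_cols n L * B = 1\<^sub>m n" "B * mat_of_cols n L = 1\<^sub>m n"
proof -
  let ?P = "mat_of_cols n L"
  have P: "?P \<in> carrier_mat n (length L)" by simp
  obtain B where B: "B \<in> carrier_mat (length L) n" "?P * B = 1\<^sub>m n" "B * ?P = 1\<^sub>m (length L)"
    using bij_mult_mat_vec_imp_inverse[OF P _ span] L unfolding cols_independent_def by blast
  have "n \<le> length L"
  proof (rule injective_mat_dim_le[OF B(1)])
    fix v :: "complex vec" assume v: "v \<in> carrier_vec n" "B *\<^sub>v v = 0\<^sub>v (length L)"
    have "v = (?P * B) *\<^sub>v v" using B(2) v(1) by simp
    also have "\<dots> = ?P *\<^sub>v (B *\<^sub>v v)" using P B(1) v(1) by (rule assoc_mult_mat_vec)
    finally show "v = 0\<^sub>v n" using v(2) P by simp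
  qed
  then have "length L = n" using cols_independent_length_le[OF L] by simp
  then show ?thesis using that B by auto
qed

lemma mult_mat_of_cols_append_zero_pad:
  assumes ws: "set ws \<subseteq> carrier_vec n" and us: "set us \<subseteq> carrier_vec n"
    and c: "c \<in> carrier_vec (length ws)"
  shows "mat_of_cols n (ws @ us) *\<^sub>v vec (length (ws @ us)) (\<lambda>l. if l < length ws then c $ l else 0) =
    mat_of_cols n ws *\<^sub>v c"
proof (rule eq_vecI)
  fix i assume "i < dim_vec (mat_of_cols n ws *\<^sub>v c)"
  then have i: "i < n" by simp
  have "(mat_of_cols n (ws @ us) *\<^sub>v vec (length (ws @ us)) (\<lambda>l. if l < length ws then c $ l else 0)) $ i
      = (\<Sum>l<length (ws @ us). (ws @ us) ! l $ i * (if l < length ws then c $ l else 0))"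
    using i by (subst index_mult_mat_vec_sum[of _ n "length (ws @ us)"]) (auto simp: mat_of_cols_def)
  also have "\<dots> = (\<Sum>l<length ws. ws ! l $ i * c $ l)"
    by (rule sum.mono_neutral_cong_right) (auto simp: nth_append)
  also have "\<dots> = (mat_of_cols n ws *\<^sub>v c) $ i"
    using i c by (subst index_mult_mat_vec_sum[of _ n "length ws"]) (auto simp: mat_of_cols_def)
  finally show "(mat_of_cols n (ws @ us) *\<^sub>v vec (length (ws @ us)) (\<lambda>l. if l < length ws then c $ l else 0)) $ i
      = (mat_of_cols n ws *\<^sub>v c) $ i" .
qed simp

lemma subspace_basis_extension:
  assumes W: "is_subspace n W"
  obtains ws us B where "cols_independent n ws" "set ws \<subseteq> W" "set us \<subseteq> carrier_vec n"
    "\<And>w. w \<in> W \<Longrightarrow> \<exists>c\<in>carrier_vec (length ws). mat_of_cols n ws *\<^sub>v c = w"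
    "length (ws @ us) = n" "B \<in> carrier_mat n n"
    "mat_of_cols n (ws @ us) * B = 1\<^sub>m n" "B * mat_of_cols n (ws @ us) = 1\<^sub>m n"
proof -
  have Wc: "W \<subseteq> carrier_vec n" using W unfolding is_subspace_def by auto
  obtain ws where ws: "cols_independent n ws" "set ws \<subseteq> W"
      "\<And>w. w \<in> W \<Longrightarrow> \<not> cols_independent n (ws @ [w])"
    using cols_independent_extend_maximal[OF Wc cols_independent_Nil] by auto
  have wsc: "set ws \<subseteq> carrier_vec n" using ws Wc by auto
  obtain us where us: "cols_independent n (ws @ us)" "set us \<subseteq> carrier_vec n"
      "\<And>v. v \<in> carrier_vec n \<Longrightarrow> \<not> cols_independent n (ws @ us @ [v])"
    using cols_independent_extend_maximal[OF subset_refl ws(1) wsc] by blast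
  have "\<exists>c\<in>carrier_vec (length ws). mat_of_cols n ws *\<^sub>v c = w" if "w \<in> W" for w
    using maximal_cols_independent_spans[OF ws(1)] ws(3) that Wc by blast
  moreover have "\<exists>c\<in>carrier_vec (length (ws @ us)). mat_of_cols n (ws @ us) *\<^sub>v c = v"
    if "v \<in> carrier_vec n" for v
    by (rule maximal_cols_independent_spans[OF us(1) that]) (use us(3)[OF that] in simp)
  then obtain B where "length (ws @ us) = n" "B \<in> carrier_mat n n"
      "mat_of_cols n (ws @ us) * B = 1\<^sub>m n" "B * mat_of_cols n (ws @ us) = 1\<^sub>m n"
    using cols_independent_spanning_inverse[OF us(1)] by blast
  ultimately show ?thesis using that ws(1,2) us(2) by blast
qed

lemma subspace_adapted_basis:
  assumes W: "is_subspace n W" and W0: "W \<noteq> {0\<^sub>v n}" and W1: "W \<noteq> carrier_vec n"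
  obtains k P B where "0 < k" "k < n" "P \<in> carrier_mat n n" "B \<in> carrier_mat n n"
    "P * B = 1\<^sub>m n" "B * P = 1\<^sub>m n" "\<And>j. j < k \<Longrightarrow> col P j \<in> W"
    "\<And>w. w \<in> W \<Longrightarrow> \<exists>c\<in>carrier_vec n. P *\<^sub>v c = w \<and> (\<forall>l. k \<le> l \<longrightarrow> l < n \<longrightarrow> c $ l = 0)"
proof -
  obtain ws us B where ws: "cols_independent n ws" "set ws \<subseteq> W" and us: "set us \<subseteq> carrier_vec n"
    and spanW: "\<And>w. w \<in> W \<Longrightarrow> \<exists>c\<in>carrier_vec (length ws). mat_of_cols n ws *\<^sub>v c = w"
    and B: "length (ws @ us) = n" "B \<in> carrier_mat n n"
      "mat_of_cols n (ws @ us) * B = 1\<^sub>m n" "B * mat_of_cols n (ws @ us) = 1\<^sub>m n"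
    using subspace_basis_extension[OF W] by blast
  have wsc: "set ws \<subseteq> carrier_vec n" using ws(2) W unfolding is_subspace_def by auto
  define k where "k = length ws"
  define P where "P = mat_of_cols n (ws @ us)"
  have P: "P \<in> carrier_mat n n" unfolding P_def using mat_of_cols_carrier(1)[of n "ws @ us"] B(1) by simp
  have k0: "0 < k"
  proof (rule ccontr)
    assume "\<not> 0 < k"
    then have "mat_of_cols n ws *\<^sub>v c = 0\<^sub>v n" if "c \<in> carrier_vec (length ws)" for c
      using that unfolding k_def by (intro eq_vecI) (auto simp: mat_of_cols_def scalar_prod_def)
    then have "w = 0\<^sub>v n" if "w \<in> W" for w using spanW[OF that] by force
    then show False using W0 W unfolding is_subspace_def by auto
  qed
  have kn: "k < n"
  proof (rule ccontr)
    assume "\<not> k < n"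
    then have "us = []" using B(1) unfolding k_def by (cases us) auto
    have "v \<in> W" if v: "v \<in> carrier_vec n" for v
    proof -
      have "B *\<^sub>v v \<in> carrier_vec (length ws)" using B(1,2) v \<open>us = []\<close> by simp
      then have "mat_of_cols n ws *\<^sub>v (B *\<^sub>v v) \<in> W" by (rule is_subspace_mult_mat_of_cols[OF W ws(2)])
      moreover have "mat_of_cols n ws *\<^sub>v (B *\<^sub>v v) = v"
        using B(2,3) P v \<open>us = []\<close> unfolding P_def by (simp add: assoc_mult_mat_vec[symmetric])
      ultimately show ?thesis by simp
    qed
    with W1 W show False unfolding is_subspace_def by auto
  qed
  show ?thesis
  proof (rule that[OF k0 kn P B(2) B(3-4)[folded P_def]])
    show "col P j \<in> W" if "j < k" for j
      using that ws(2) wsc us unfolding P_def k_def by (subst col_mat_of_cols) (auto simp: nth_append)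
    fix w assume "w \<in> W"
    then obtain c where c: "c \<in> carrier_vec k" "mat_of_cols n ws *\<^sub>v c = w" using spanW unfolding k_def by blast
    define c' where "c' = vec n (\<lambda>l. if l < k then c $ l else 0)"
    have "P *\<^sub>v c' = w"
      using mult_mat_of_cols_append_zero_pad[OF wsc us c(1)[unfolded k_def]] c(2) B(1)
      unfolding P_def c'_def k_def by simp
    moreover have "c' \<in> carrier_vec n" "\<forall>l. k \<le> l \<longrightarrow> l < n \<longrightarrow> c' $ l = 0"
      unfolding c'_def by auto
    ultimately show "\<exists>c\<in>carrier_vec n. P *\<^sub>v c = w \<and> (\<forall>l. k \<le> l \<longrightarrow> l < n \<longrightarrow> c $ l = 0)"
      by blast
  qed
qed

lemma sum_lessThan_split_shift:
  fixes f :: "nat \<Rightarrow> 'b::comm_monoid_add"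
  assumes "k \<le> n"
  shows "(\<Sum>l<n. f l) = (\<Sum>l<k. f l) + (\<Sum>l<n - k. f (l + k))"
proof -
  have "(\<Sum>l<n. f l) = (\<Sum>l<k. f l) + (\<Sum>l\<in>{k..<n}. f l)"
    using assms by (simp add: lessThan_atLeast0 sum.atLeastLessThan_concat)
  also have "(\<Sum>l\<in>{k..<n}. f l) = (\<Sum>l<n - k. f (l + k))"
    using assms sum.shift_bounds_nat_ivl[of f 0 k "n - k"] by (simp add: lessThan_atLeast0)
  finally show ?thesis .
qed

lemma is_rep_conjugate:
  assumes r: "is_rep G n \<rho>" and P: "P \<in> carrier_mat n n" and B: "B \<in> carrier_mat n n"
    and PB: "P * B = 1\<^sub>m n" and BP: "B * P = 1\<^sub>m n"
  shows "is_rep G n (\<lambda>g. B * \<rho> g * P)"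
  unfolding is_rep_def
proof (intro conjI ballI)
  fix g h assume g: "g \<in> carrier G" and h: "h \<in> carrier G"
  have rg: "\<rho> g \<in> carrier_mat n n" and rh: "\<rho> h \<in> carrier_mat n n"
    using is_rep_carrier[OF r g] is_rep_carrier[OF r h] .
  have "B * \<rho> g * P * (B * \<rho> h * P) = B * \<rho> g * (P * B) * \<rho> h * P"
    using rg rh P B by (simp add: assoc_mult_mat[of _ n n _ n _ n])
  then show "B * \<rho> (g \<otimes>\<^bsub>G\<^esub> h) * P = B * \<rho> g * P * (B * \<rho> h * P)"
    using is_rep_mult[OF r g h] PB rg rh B by (simp add: assoc_mult_mat[of B n n _ n _ n])
qed (use is_rep_carrier[OF r] is_rep_one[OF r] BP P B in auto)

lemma mat_trace_conjugate:
  assumes "X \<in> carrier_mat n n" "P \<in> carrier_mat n n" "B \<in> carrier_mat n n" "P * B = 1\<^sub>m n"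
  shows "mat_trace (B * X * P) = mat_trace X"
  using assms mat_trace_mult_comm[of "B * X" n n P]
  by (simp add: assoc_mult_mat[of P n n B n X n, symmetric])

lemma is_rep_mult_index_split:
  assumes r: "is_rep G n M" and k: "k \<le> n"
    and g: "g \<in> carrier G" and h: "h \<in> carrier G" and i: "i < n" and j: "j < n"
  shows "M (g \<otimes>\<^bsub>G\<^esub> h) $$ (i,j) =
    (\<Sum>l<k. M g $$ (i,l) * M h $$ (l,j)) + (\<Sum>l<n-k. M g $$ (i,l+k) * M h $$ (l+k,j))"
  using is_rep_mult[OF r g h] index_mult_mat_sum[OF is_rep_carrier[OF r g] is_rep_carrier[OF r h] i j]
    sum_lessThan_split_shift[OF k] by simp

lemma block_triangular_rep_upper_left:
  assumes r: "is_rep G n M" and k: "k \<le> n"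
    and z: "\<And>g i j. g \<in> carrier G \<Longrightarrow> k \<le> i \<Longrightarrow> i < n \<Longrightarrow> j < k \<Longrightarrow> M g $$ (i,j) = 0"
  shows "is_rep G k (\<lambda>g. mat k k (\<lambda>(i,j). M g $$ (i,j)))" (is "is_rep G k ?A")
  unfolding is_rep_def
proof (intro conjI ballI)
  fix g h assume g: "g \<in> carrier G" and h: "h \<in> carrier G"
  show "?A (g \<otimes>\<^bsub>G\<^esub> h) = ?A g * ?A h"
  proof (rule eq_matI)
    fix i j assume "i < dim_row (?A g * ?A h)" "j < dim_col (?A g * ?A h)"
    hence i: "i < k" and j: "j < k" by auto
    have "(\<Sum>l<n-k. M g $$ (i,l+k) * M h $$ (l+k,j)) = 0"
      using z[OF h] j by (intro sum.neutral) auto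
    then show "?A (g \<otimes>\<^bsub>G\<^esub> h) $$ (i,j) = (?A g * ?A h) $$ (i,j)"
      using i j k is_rep_mult_index_split[OF r k g h, of i j] by (subst index_mult_mat_sum[of _ k k _ k]) auto
  qed auto
qed (use is_rep_one[OF r] k in \<open>auto intro!: eq_matI\<close>)

lemma block_triangular_rep_lower_right:
  assumes r: "is_rep G n M" and k: "k \<le> n"
    and z: "\<And>g i j. g \<in> carrier G \<Longrightarrow> k \<le> i \<Longrightarrow> i < n \<Longrightarrow> j < k \<Longrightarrow> M g $$ (i,j) = 0"
  shows "is_rep G (n - k) (\<lambda>g. mat (n - k) (n - k) (\<lambda>(i,j). M g $$ (i + k, j + k)))"
    (is "is_rep G (n - k) ?C")
  unfolding is_rep_def
proof (intro conjI ballI)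
  fix g h assume g: "g \<in> carrier G" and h: "h \<in> carrier G"
  show "?C (g \<otimes>\<^bsub>G\<^esub> h) = ?C g * ?C h"
  proof (rule eq_matI)
    fix i j assume "i < dim_row (?C g * ?C h)" "j < dim_col (?C g * ?C h)"
    hence i: "i < n - k" and j: "j < n - k" by auto
    have "(\<Sum>l<k. M g $$ (i+k,l) * M h $$ (l,j+k)) = 0"
      using z[OF g] i by (intro sum.neutral) auto
    then show "?C (g \<otimes>\<^bsub>G\<^esub> h) $$ (i,j) = (?C g * ?C h) $$ (i,j)"
      using i j k is_rep_mult_index_split[OF r k g h, of "i+k" "j+k"]
      by (subst index_mult_mat_sum[of _ "n-k" "n-k" _ "n-k"]) auto
  qed auto
qed (use is_rep_one[OF r] k in \<open>auto intro!: eq_matI\<close>)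

lemma mat_trace_diagonal_blocks:
  assumes "X \<in> carrier_mat n n" "k \<le> n"
  shows "mat_trace X = mat_trace (mat k k (\<lambda>(i,j). X $$ (i,j))) +
    mat_trace (mat (n - k) (n - k) (\<lambda>(i,j). X $$ (i + k, j + k)))"
  using assms sum_lessThan_split_shift[OF assms(2), of "\<lambda>i. X $$ (i,i)"] unfolding mat_trace_def by simp

lemma reducible_rep_splits:
  assumes r: "is_rep G n \<rho>" and n: "n > 0" and red: "\<not> irred_rep G n \<rho>"
  obtains k A C where "0 < k" "k < n" "is_rep G k A" "is_rep G (n - k) C"
    "\<And>g. g \<in> carrier G \<Longrightarrow> character G \<rho> g = character G A g + character G C g"
proof -
  obtain W where W: "is_subspace n W" "\<And>g w. g \<in> carrier G \<Longrightarrow> w \<in> W \<Longrightarrow> \<rho> g *\<^sub>v w \<in> W"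
      "W \<noteq> {0\<^sub>v n}" "W \<noteq> carrier_vec n"
    using r n red unfolding irred_rep_def by blast
  obtain k P B where kPB: "0 < k" "k < n" "P \<in> carrier_mat n n" "B \<in> carrier_mat n n"
      "P * B = 1\<^sub>m n" "B * P = 1\<^sub>m n" "\<And>j. j < k \<Longrightarrow> col P j \<in> W"
      "\<And>w. w \<in> W \<Longrightarrow> \<exists>c\<in>carrier_vec n. P *\<^sub>v c = w \<and> (\<forall>l. k \<le> l \<longrightarrow> l < n \<longrightarrow> c $ l = 0)"
    using subspace_adapted_basis[OF W(1,3,4)] by blast
  define M where "M g = B * \<rho> g * P" for g
  have M: "is_rep G n M" unfolding M_def by (rule is_rep_conjugate[OF r kPB(3-6)])
  text \<open>\<open>W\<close> is invariant and spanned by the first \<open>k\<close> columns of \<open>P\<close>, so \<open>M\<close> is block upper triangular.\<close>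
  have zero: "M g $$ (i,j) = 0" if g: "g \<in> carrier G" and i: "k \<le> i" "i < n" and j: "j < k" for g i j
  proof -
    have rg: "\<rho> g \<in> carrier_mat n n" using is_rep_carrier[OF r g] .
    obtain c where c: "c \<in> carrier_vec n" "P *\<^sub>v c = \<rho> g *\<^sub>v col P j" "\<forall>l. k \<le> l \<longrightarrow> l < n \<longrightarrow> c $ l = 0"
      using kPB(8)[OF W(2)[OF g kPB(7)[OF j]]] by blast
    have "M g $$ (i,j) = (B *\<^sub>v (\<rho> g *\<^sub>v col P j)) $ i"
      unfolding M_def using i j kPB(2-4) rg by (simp add: assoc_mult_mat_vec[of B n n _ n])
    also have "\<dots> = ((B * P) *\<^sub>v c) $ i" using c kPB(3,4) by (simp add: assoc_mult_mat_vec[of B n n P n])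
    finally show ?thesis using c i kPB(6) by simp
  qed
  have kn: "k \<le> n" using kPB(2) by simp
  show ?thesis
  proof (rule that[OF kPB(1,2) block_triangular_rep_upper_left[OF M kn zero]
        block_triangular_rep_lower_right[OF M kn zero]])
    fix g assume g: "g \<in> carrier G"
    have "mat_trace (\<rho> g) = mat_trace (M g)"
      unfolding M_def using mat_trace_conjugate[OF is_rep_carrier[OF r g] kPB(3-5)] by simp
    then show "character G \<rho> g = character G (\<lambda>g. mat k k (\<lambda>(i,j). M g $$ (i,j))) g +
        character G (\<lambda>g. mat (n - k) (n - k) (\<lambda>(i,j). M g $$ (i + k, j + k))) g"
      unfolding character_def
      using mat_trace_diagonal_blocks[OF is_rep_carrier[OF M g] kn] g by simp
  qed
qed

context finite_group
begin

theorem character_decomposition: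
  "is_rep G n \<rho> \<Longrightarrow> \<exists>c. \<forall>g. character G \<rho> g = (\<Sum>\<chi>\<in>Irr G. of_nat (c \<chi>) * \<chi> g)"
proof (induction n arbitrary: \<rho> rule: less_induct)
  case (less n)
  consider "n = 0" | "irred_rep G n \<rho>" | "n > 0" "\<not> irred_rep G n \<rho>" by auto
  then show ?case
  proof cases
    case 1
    have "character G \<rho> g = 0" for g
    proof (cases "g \<in> carrier G")
      case True
      then have "\<rho> g \<in> carrier_mat 0 0" using is_rep_carrier[OF less.prems] 1 by simp
      then show ?thesis unfolding character_def mat_trace_def by simp
    qed (simp add: character_outside)
    then show ?thesis by (intro exI[of _ "\<lambda>_. 0"]) simp
  next
    case 2
    let ?\<chi> = "character G \<rho>"
    have \<chi>: "?\<chi> \<in> Irr G" using 2 unfolding Irr_def by blast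
    have "(\<Sum>\<psi>\<in>Irr G. of_nat (if \<psi> = ?\<chi> then 1 else 0) * \<psi> g) =
        (\<Sum>\<psi>\<in>Irr G. if \<psi> = ?\<chi> then ?\<chi> g else 0)" for g
      by (intro sum.cong refl) simp
    then show ?thesis using finite_Irr \<chi> by (intro exI[of _ "\<lambda>\<psi>. if \<psi> = ?\<chi> then 1 else 0"]) simp
  next
    case 3
    obtain k A C where kAC: "0 < k" "k < n" "is_rep G k A" "is_rep G (n - k) C"
        "\<And>g. g \<in> carrier G \<Longrightarrow> character G \<rho> g = character G A g + character G C g"
      using reducible_rep_splits[OF less.prems 3] by blast
    have "n - k < n" using kAC(1,2) by simp
    then obtain cA cC where
      "\<forall>g. character G A g = (\<Sum>\<chi>\<in>Irr G. of_nat (cA \<chi>) * \<chi> g)"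
      "\<forall>g. character G C g = (\<Sum>\<chi>\<in>Irr G. of_nat (cC \<chi>) * \<chi> g)"
      using less.IH[OF kAC(2,3)] less.IH[OF _ kAC(4)] by blast
    then have "character G \<rho> g = (\<Sum>\<chi>\<in>Irr G. of_nat (cA \<chi> + cC \<chi>) * \<chi> g)" for g
    proof (cases "g \<in> carrier G")
      case False
      have "(\<Sum>\<chi>\<in>Irr G. of_nat (cA \<chi> + cC \<chi>) * \<chi> g) = 0"
        using Irr_outside[OF _ False] by (intro sum.neutral) simp
      then show ?thesis using False by (simp add: character_outside)
    qed (simp add: kAC(5) sum.distrib distrib_right)
    then show ?thesis by (intro exI[of _ "\<lambda>\<chi>. cA \<chi> + cC \<chi>"]) blast
  qed
qed

lemma character_multiplicity:
  assumes c: "\<forall>g. character G \<rho> g = (\<Sum>\<chi>\<in>Irr G. of_nat (c \<chi>) * \<chi> g)" and \<chi>: "\<chi> \<in> Irr G"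
  shows "(\<Sum>g\<in>carrier G. character G \<rho> g * cnj (\<chi> g)) = of_nat (c \<chi> * card (carrier G))"
proof -
  have "(\<Sum>g\<in>carrier G. character G \<rho> g * cnj (\<chi> g)) =
        (\<Sum>g\<in>carrier G. \<Sum>\<psi>\<in>Irr G. of_nat (c \<psi>) * (\<psi> g * cnj (\<chi> g)))"
    unfolding c[rule_format] by (simp add: sum_distrib_right mult.assoc)
  also have "\<dots> = (\<Sum>\<psi>\<in>Irr G. of_nat (c \<psi>) * (\<Sum>g\<in>carrier G. \<psi> g * cnj (\<chi> g)))"
    by (subst sum.swap) (simp only: sum_distrib_left)
  also have "\<dots> = (\<Sum>\<psi>\<in>Irr G. if \<psi> = \<chi> then of_nat (c \<chi> * card (carrier G)) else 0)"
    using Irr_orthogonality[OF _ \<chi>] by (intro sum.cong refl) simp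
  also have "\<dots> = of_nat (c \<chi> * card (carrier G))" using finite_Irr \<chi> by simp
  finally show ?thesis .
qed

end

section \<open>Permutation characters on cosets\<close>

context group
begin

lemma permutation_rep_is_rep:
  assumes f: "bij_betw f {..<N} E"
    and closed: "\<And>x g. x \<in> E \<Longrightarrow> g \<in> carrier G \<Longrightarrow> act x g \<in> E"
    and act_one: "\<And>x. x \<in> E \<Longrightarrow> act x \<one> = x"
    and act_mult: "\<And>x g h. x \<in> E \<Longrightarrow> g \<in> carrier G \<Longrightarrow> h \<in> carrier G \<Longrightarrow> act x (g \<otimes> h) = act (act x g) h"
  shows "is_rep G N (\<lambda>g. mat N N (\<lambda>(i,j). if act (f i) g = f j then 1 else 0))"
    (is "is_rep G N ?\<rho>")
proof -
  have fE: "f i \<in> E" if "i < N" for i using f that unfolding bij_betw_def by auto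
  have finj: "i = j" if "i < N" "j < N" "f i = f j" for i j
    using f that unfolding bij_betw_def inj_on_def by auto
  have fsurj: "\<exists>j<N. f j = x" if "x \<in> E" for x
  proof -
    have "x \<in> f ` {..<N}" using f that unfolding bij_betw_def by simp
    then show ?thesis by auto
  qed
  show ?thesis unfolding is_rep_def
  proof (intro conjI ballI)
    show "?\<rho> \<one> = 1\<^sub>m N"
    proof (rule eq_matI)
      fix i j assume "i < dim_row (1\<^sub>m N)" "j < dim_col (1\<^sub>m N :: complex mat)"
      then show "?\<rho> \<one> $$ (i,j) = 1\<^sub>m N $$ (i,j)" using act_one[OF fE] finj by auto
    qed simp_all
  next
    fix g h assume g: "g \<in> carrier G" and h: "h \<in> carrier G"
    show "?\<rho> (g \<otimes> h) = ?\<rho> g * ?\<rho> h"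
    proof (rule eq_matI)
      fix i k assume "i < dim_row (?\<rho> g * ?\<rho> h)" "k < dim_col (?\<rho> g * ?\<rho> h)"
      hence i: "i < N" and k: "k < N" by auto
      obtain j0 where j0: "j0 < N" "f j0 = act (f i) g" using fsurj[OF closed[OF fE[OF i] g]] by blast
      have "(?\<rho> g * ?\<rho> h) $$ (i,k) =
          (\<Sum>j<N. (if act (f i) g = f j then 1 else 0) * (if act (f j) h = f k then 1 else 0))"
        using index_mult_mat_sum[of "?\<rho> g" N N "?\<rho> h" N i k] i k by simp
      also have "\<dots> = (\<Sum>j<N. if j = j0 then (if act (f j0) h = f k then 1 else 0) else 0)"
      proof (rule sum.cong[OF refl])
        fix j assume "j \<in> {..<N}"
        then have "(act (f i) g = f j) = (j = j0)" using finj[OF j0(1), of j] j0(2) by auto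
        then show "(if act (f i) g = f j then 1 else 0) * (if act (f j) h = f k then 1 else 0) =
            (if j = j0 then (if act (f j0) h = f k then 1 else (0::complex)) else 0)" by simp
      qed
      also have "\<dots> = ?\<rho> (g \<otimes> h) $$ (i,k)" using i k j0 act_mult[OF fE[OF i] g h] by simp
      finally show "?\<rho> (g \<otimes> h) $$ (i,k) = (?\<rho> g * ?\<rho> h) $$ (i,k)" ..
    qed simp_all
  qed simp
qed

lemma permutation_rep_trace:
  assumes f: "bij_betw f {..<N} E"
  shows "mat_trace (mat N N (\<lambda>(i,j). if act (f i) g = f j then 1 else 0)) =
    of_nat (card {x \<in> E. act x g = x})"
proof -
  have inj: "inj_on f {i \<in> {..<N}. act (f i) g = f i}"
    using f unfolding bij_betw_def inj_on_def by auto
  have img: "f ` {i \<in> {..<N}. act (f i) g = f i} = {x \<in> E. act x g = x}"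
  proof (intro equalityI subsetI)
    fix x assume x: "x \<in> {x \<in> E. act x g = x}"
    then have "x \<in> f ` {..<N}" using f unfolding bij_betw_def by simp
    then obtain i where "i < N" "f i = x" by auto
    then show "x \<in> f ` {i \<in> {..<N}. act (f i) g = f i}" using x by auto
  qed (use f in \<open>auto simp: bij_betw_def\<close>)
  have "(\<Sum>i<N. if act (f i) g = f i then 1 else 0) = (\<Sum>i\<in>{i \<in> {..<N}. act (f i) g = f i}. 1 :: complex)"
    by (rule sum.inter_filter[symmetric]) simp
  then show ?thesis unfolding mat_trace_def using card_image[OF inj] unfolding img by (simp add: sum_constant)
qed

lemma permutation_rep:
  assumes fin: "finite E"
    and closed: "\<And>x g. x \<in> E \<Longrightarrow> g \<in> carrier G \<Longrightarrow> act x g \<in> E"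
    and act_one: "\<And>x. x \<in> E \<Longrightarrow> act x \<one> = x"
    and act_mult: "\<And>x g h. x \<in> E \<Longrightarrow> g \<in> carrier G \<Longrightarrow> h \<in> carrier G \<Longrightarrow> act x (g \<otimes> h) = act (act x g) h"
  obtains \<rho> where "is_rep G (card E) \<rho>"
    "\<And>g. mat_trace (\<rho> g) = of_nat (card {x \<in> E. act x g = x})"
proof -
  obtain f where f: "bij_betw f {..<card E} E"
    using ex_bij_betw_nat_finite[OF fin, unfolded atLeast0LessThan] by blast
  show ?thesis
    by (rule that[OF permutation_rep_is_rep[where act = act, OF f closed act_one act_mult]
          permutation_rep_trace[where act = act, OF f]])
qed

lemma rcosets_mult_closed:
  assumes K: "subgroup K G" and X: "X \<in> rcosets K" and g: "g \<in> carrier G"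
  shows "X #> g \<in> rcosets K"
proof -
  obtain a where a: "a \<in> carrier G" "X = K #> a" using X unfolding RCOSETS_def by auto
  have "X #> g = K #> (a \<otimes> g)" using a g coset_mult_assoc subgroup.subset[OF K] by simp
  then show ?thesis using rcosetsI[OF subgroup.subset[OF K]] a g by simp
qed

lemma rcoset_stabilizer:
  assumes K: "subgroup K G" and a: "a \<in> carrier G"
  shows "{g \<in> carrier G. K #> a #> g = K #> a} = (\<lambda>k. inv a \<otimes> k \<otimes> a) ` K"
proof (intro equalityI subsetI)
  have Ksub: "K \<subseteq> carrier G" using subgroup.subset[OF K] .
  fix g assume "g \<in> {g \<in> carrier G. K #> a #> g = K #> a}"
  hence g: "g \<in> carrier G" "K #> (a \<otimes> g) = K #> a" using a coset_mult_assoc[OF Ksub a] by auto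
  hence "a \<otimes> g \<in> K #> a" using repr_independenceD[OF K _ g(2)[symmetric]] a by simp
  hence k: "a \<otimes> g \<otimes> inv a \<in> K" using subgroup.rcos_module_imp[OF K is_group a] by simp
  have "g = inv a \<otimes> (a \<otimes> g \<otimes> inv a) \<otimes> a"
    using a g by (simp add: m_assoc) (simp add: m_assoc[symmetric])
  then show "g \<in> (\<lambda>k. inv a \<otimes> k \<otimes> a) ` K" using k by blast
next
  have Ksub: "K \<subseteq> carrier G" using subgroup.subset[OF K] .
  fix g assume "g \<in> (\<lambda>k. inv a \<otimes> k \<otimes> a) ` K"
  then obtain k where k: "k \<in> K" "g = inv a \<otimes> k \<otimes> a" by blast
  have kc: "k \<in> carrier G" using k Ksub by auto
  have gc: "g \<in> carrier G" using k kc a by simp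
  have "a \<otimes> g = k \<otimes> a" using k kc a by (simp add: m_assoc[symmetric])
  hence "a \<otimes> g \<in> K #> a" using rcosI[OF k(1) Ksub a] by simp
  hence "K #> a = K #> (a \<otimes> g)" using repr_independence[OF _ a K] by simp
  then show "g \<in> {g \<in> carrier G. K #> a #> g = K #> a}" using a gc coset_mult_assoc[OF Ksub a gc] by simp
qed

text \<open>The stabiliser of a coset is a conjugate of \<open>K\<close>, so a class function sums to the same value over both.\<close>
lemma sum_rcoset_stabilizer:
  assumes K: "subgroup K G" and X: "X \<in> rcosets K"
    and cls: "\<And>x g. x \<in> carrier G \<Longrightarrow> g \<in> carrier G \<Longrightarrow> F (x \<otimes> g \<otimes> inv x) = F g"
  shows "(\<Sum>g\<in>{g \<in> carrier G. X #> g = X}. F g) = (\<Sum>k\<in>K. F k)"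
proof -
  obtain a where a: "a \<in> carrier G" "X = K #> a" using X unfolding RCOSETS_def by auto
  have Ksub: "K \<subseteq> carrier G" using subgroup.subset[OF K] .
  have "inj_on (\<lambda>k. inv a \<otimes> k \<otimes> a) K"
  proof (rule inj_onI)
    fix x y assume "x \<in> K" "y \<in> K" "inv a \<otimes> x \<otimes> a = inv a \<otimes> y \<otimes> a"
    moreover have "x \<in> carrier G" "y \<in> carrier G" using \<open>x \<in> K\<close> \<open>y \<in> K\<close> Ksub by auto
    ultimately show "x = y" using a(1) by simp
  qed
  then have "(\<Sum>g\<in>{g \<in> carrier G. X #> g = X}. F g) = (\<Sum>k\<in>K. F (inv a \<otimes> k \<otimes> a))"
    unfolding a(2) rcoset_stabilizer[OF K a(1)] by (rule sum.reindex_cong) auto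
  also have "\<dots> = (\<Sum>k\<in>K. F k)"
    using cls[OF inv_closed[OF a(1)]] a(1) Ksub by (intro sum.cong refl) auto
  finally show ?thesis .
qed

lemma rcoset_mult_inv_fixed_iff:
  assumes H: "subgroup H G" and X: "X \<in> rcosets H" and h: "h \<in> carrier G"
  shows "X #> inv h = X \<longleftrightarrow> X #> h = X"
proof -
  have Xc: "X \<subseteq> carrier G" using subgroup.rcosets_carrier[OF H is_group X] .
  have "X #> h #> inv h = X" "X #> inv h #> h = X"
    using coset_mult_assoc[OF Xc] h Xc by simp_all
  then show ?thesis by metis
qed

lemma coset_action_group_action:
  assumes H: "subgroup H G"
  shows "group_action (G\<lparr>carrier := H\<rparr>) (rcosets H) (\<lambda>h. \<lambda>X\<in>rcosets H. X #> inv h)"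
    (is "group_action ?H ?E ?\<phi>")
proof -
  have Hc: "H \<subseteq> carrier G" using subgroup.subset[OF H] .
  have Xc: "X \<subseteq> carrier G" if "X \<in> ?E" for X using subgroup.rcosets_carrier[OF H is_group that] .
  have bij: "?\<phi> h \<in> carrier (BijGroup ?E)" if h: "h \<in> H" for h
  proof -
    have hc: "h \<in> carrier G" "inv h \<in> carrier G" using h Hc by auto
    have "bij_betw (\<lambda>X. X #> inv h) ?E ?E"
    proof (rule bij_betwI[where g = "\<lambda>X. X #> h"])
      fix X assume X: "X \<in> ?E"
      show "X #> inv h #> h = X" "X #> h #> inv h = X"
        using coset_mult_assoc[OF Xc[OF X]] hc Xc[OF X] by simp_all
    qed (use rcosets_mult_closed[OF H] hc in auto)
    then have "bij_betw (?\<phi> h) ?E ?E" by (rule bij_betw_cong[THEN iffD1, rotated]) simp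
    then show ?thesis unfolding BijGroup_def Bij_def by simp
  qed
  have mult: "?\<phi> (x \<otimes> y) = ?\<phi> x \<otimes>\<^bsub>BijGroup ?E\<^esub> ?\<phi> y" if x: "x \<in> H" and y: "y \<in> H" for x y
  proof -
    have c: "inv x \<in> carrier G" "inv y \<in> carrier G" "x \<in> carrier G" "y \<in> carrier G"
      using x y Hc by auto
    have "?\<phi> (x \<otimes> y) = compose ?E (?\<phi> x) (?\<phi> y)"
    proof
      fix X show "?\<phi> (x \<otimes> y) X = compose ?E (?\<phi> x) (?\<phi> y) X"
      proof (cases "X \<in> ?E")
        case True
        have "X #> inv (x \<otimes> y) = X #> inv y #> inv x"
          using coset_mult_assoc[OF Xc[OF True]] c by (simp add: inv_mult_group)
        then show ?thesis using True rcosets_mult_closed[OF H True c(2)]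
          by (simp add: compose_def)
      qed (simp add: compose_def)
    qed
    then show ?thesis using bij x y unfolding BijGroup_def by simp
  qed
  show ?thesis
    unfolding group_action_def group_hom_def group_hom_axioms_def hom_def
    using subgroup.subgroup_is_group[OF H is_group] group_BijGroup bij mult by auto
qed

lemma fixX_one:
  assumes "subgroup H G"
  shows "fixX G H \<one> = card (rcosets H)"
proof -
  have "{X \<in> rcosets H. X #> \<one> = X} = rcosets H"
    using subgroup.rcosets_carrier[OF assms is_group] by auto
  then show ?thesis unfolding fixX_def by simp
qed

lemma fixX_trivial_subgroup:
  assumes h: "h \<in> carrier G" "h \<noteq> \<one>"
  shows "fixX G {\<one>} h = 0"
proof -
  have "X #> h \<noteq> X" if X: "X \<in> rcosets {\<one>}" for X
  proof -
    obtain a where a: "a \<in> carrier G" "X = {\<one>} #> a" using X unfolding RCOSETS_def by auto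
    then have Xa: "X = {a}" unfolding r_coset_def by auto
    have "X #> h = {a \<otimes> h}" unfolding Xa r_coset_def by auto
    then show ?thesis unfolding Xa using a h by simp
  qed
  then have "{X \<in> rcosets {\<one>}. X #> h = X} = {}" by blast
  then show ?thesis unfolding fixX_def by (simp only: card.empty)
qed

end

context finite_group
begin

lemma coset_permutation_rep:
  assumes K: "subgroup K G"
  obtains \<rho> where "is_rep G (card (rcosets K)) \<rho>"
    "\<And>g. g \<in> carrier G \<Longrightarrow> mat_trace (\<rho> g) = of_nat (fixX G K g)"
proof -
  have Xc: "X \<subseteq> carrier G" if "X \<in> rcosets K" for X
    using subgroup.rcosets_carrier[OF K is_group that] .
  show ?thesis
  proof (rule permutation_rep[of "rcosets K" "\<lambda>X g. X #> g"])
    show "finite (rcosets K)"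
      using rcosets_subset_PowG[OF K] finite_carrier by (meson finite_Pow_iff finite_subset)
  qed (use that rcosets_mult_closed[OF K] Xc coset_mult_assoc in \<open>auto simp: fixX_def\<close>)
qed

lemma sum_fixX_mult_class_function:
  fixes F :: "'a \<Rightarrow> complex"
  assumes K: "subgroup K G"
    and cls: "\<And>x g. x \<in> carrier G \<Longrightarrow> g \<in> carrier G \<Longrightarrow> F (x \<otimes> g \<otimes> inv x) = F g"
  shows "(\<Sum>g\<in>carrier G. of_nat (fixX G K g) * F g) = of_nat (card (rcosets K)) * (\<Sum>k\<in>K. F k)"
proof -
  have finR: "finite (rcosets K)"
    using rcosets_subset_PowG[OF K] finite_carrier by (meson finite_Pow_iff finite_subset)
  have "(\<Sum>g\<in>carrier G. of_nat (fixX G K g) * F g) =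
        (\<Sum>g\<in>carrier G. \<Sum>X\<in>rcosets K. if X #> g = X then F g else 0)"
    unfolding fixX_def using finR by (simp add: sum.If_cases Int_def)
  also have "\<dots> = (\<Sum>X\<in>rcosets K. \<Sum>g\<in>{g \<in> carrier G. X #> g = X}. F g)"
    using finite_carrier by (subst sum.swap) (simp add: sum.If_cases Int_def)
  also have "\<dots> = of_nat (card (rcosets K)) * (\<Sum>k\<in>K. F k)"
    by (simp add: sum_rcoset_stabilizer[OF K _ cls])
  finally show ?thesis .
qed

lemma rX_mult_card_eq_sum_fixX:
  assumes H: "subgroup H G"
  shows "rX G H * card H = (\<Sum>h\<in>H. fixX G H h)"
proof -
  let ?H = "G\<lparr>carrier := H\<rparr>" and ?E = "rcosets H" and ?\<phi> = "\<lambda>h. \<lambda>X\<in>rcosets H. X #> inv h"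
  interpret act: group_action ?H ?E ?\<phi> by (rule coset_action_group_action[OF H])
  have Hc: "H \<subseteq> carrier G" using subgroup.subset[OF H] .
  have finE: "finite ?E" using rcosets_subset_PowG[OF H] finite_carrier by (meson finite_Pow_iff finite_subset)
  text \<open>Group actions in the library act on the left, hence \<open>X \<mapsto> X h\<inverse>\<close>; inverting \<open>h\<close> changes
    neither orbits nor fixed points.\<close>
  have "orbit ?H ?\<phi> X = {X #> h | h. h \<in> H}" if X: "X \<in> ?E" for X
  proof -
    have "orbit ?H ?\<phi> X = (\<lambda>h. X #> inv h) ` H" unfolding orbit_def using X by auto
    also have "\<dots> = (\<lambda>h. X #> h) ` H"
    proof (intro equalityI subsetI)
      fix Y assume "Y \<in> (\<lambda>h. X #> h) ` H"
      then obtain h where h: "h \<in> H" "Y = X #> h" by blast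
      then have "inv h \<in> H" "inv (inv h) = h" using subgroup.m_inv_closed[OF H] Hc by auto
      then show "Y \<in> (\<lambda>h. X #> inv h) ` H" using h by force
    qed (use subgroup.m_inv_closed[OF H] in auto)
    finally show ?thesis by blast
  qed
  then have "orbits ?H ?E ?\<phi> = (\<lambda>X. {X #> h | h. h \<in> H}) ` ?E" unfolding orbits_def by auto
  then have "rX G H = card (orbits ?H ?E ?\<phi>)" unfolding rX_def by simp
  moreover have "card (invariants ?E ?\<phi> h) = fixX G H h" if "h \<in> H" for h
  proof -
    have "invariants ?E ?\<phi> h = {X \<in> rcosets H. X #> h = X}"
      using rcoset_mult_inv_fixed_iff[OF H] that Hc unfolding invariants_def by auto
    then show ?thesis unfolding fixX_def by simp
  qed
  ultimately show ?thesis
    using act.burnside finite_subset[OF Hc finite_carrier] finE unfolding Coset.order_def by simp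
qed

text \<open>Frobenius reciprocity: \<open>m \<chi>\<close> is also the multiplicity of the trivial character in \<open>\<chi>|\<^sub>K\<close>.\<close>
lemma fixX_decomposition:
  assumes K: "subgroup K G"
  obtains m where "\<And>\<chi>. \<chi> \<in> Irr G \<Longrightarrow> (\<Sum>k\<in>K. \<chi> k) = of_nat (card K * m \<chi>)"
    "\<And>g. g \<in> carrier G \<Longrightarrow> of_nat (fixX G K g) = (\<Sum>\<chi>\<in>Irr G. of_nat (m \<chi>) * \<chi> g)"
proof -
  obtain \<pi> where \<pi>: "is_rep G (card (rcosets K)) \<pi>"
      "\<And>g. g \<in> carrier G \<Longrightarrow> mat_trace (\<pi> g) = of_nat (fixX G K g)"
    using coset_permutation_rep[OF K] by blast
  have fix_char: "of_nat (fixX G K g) = character G \<pi> g" if "g \<in> carrier G" for g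
    using \<pi>(2)[OF that] that unfolding character_def by simp
  obtain c where c: "\<forall>g. character G \<pi> g = (\<Sum>\<chi>\<in>Irr G. of_nat (c \<chi>) * \<chi> g)"
    using character_decomposition[OF \<pi>(1)] by blast
  have lag: "card (rcosets K) * card K = card (carrier G)"
    using lagrange[OF K] unfolding Coset.order_def .
  have "(\<Sum>k\<in>K. \<chi> k) = of_nat (card K * c \<chi>)" if \<chi>: "\<chi> \<in> Irr G" for \<chi>
  proof -
    have "card (rcosets K) * (card K * c \<chi>) = c \<chi> * card (carrier G)"
      unfolding lag[symmetric] by (simp only: mult_ac)
    then have "of_nat (card (rcosets K)) * of_nat (card K * c \<chi>) = of_nat (c \<chi> * card (carrier G))"
      by (metis of_nat_mult)
    also have "\<dots> = (\<Sum>g\<in>carrier G. of_nat (fixX G K g) * cnj (\<chi> g))"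
      using character_multiplicity[OF c \<chi>] fix_char by simp
    also have "\<dots> = of_nat (card (rcosets K)) * cnj (\<Sum>k\<in>K. \<chi> k)"
      using sum_fixX_mult_class_function[OF K] Irr_conj[OF \<chi>] by simp
    finally have "of_nat (card (rcosets K)) * of_nat (card K * c \<chi>) =
        of_nat (card (rcosets K)) * cnj (\<Sum>k\<in>K. \<chi> k)" .
    moreover have "card (rcosets K) \<noteq> 0" using lag card_carrier_pos by (cases "card (rcosets K)") auto
    ultimately have "cnj (\<Sum>k\<in>K. \<chi> k) = of_nat (card K * c \<chi>)" by simp
    from arg_cong[OF this, of cnj] show ?thesis by simp
  qed
  then show ?thesis using that[of c] fix_char c by simp
qed

lemma sum_Irr_degree_mult_eq_0:
  assumes g: "g \<in> carrier G" "g \<noteq> \<one>"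
  shows "(\<Sum>\<chi>\<in>Irr G. \<chi> \<one> * \<chi> g) = 0"
proof -
  obtain m where m: "\<And>\<chi>. \<chi> \<in> Irr G \<Longrightarrow> (\<Sum>k\<in>{\<one>}. \<chi> k) = of_nat (card {\<one>} * m \<chi>)"
      "\<And>g. g \<in> carrier G \<Longrightarrow> of_nat (fixX G {\<one>} g) = (\<Sum>\<chi>\<in>Irr G. of_nat (m \<chi>) * \<chi> g)"
    using fixX_decomposition[OF triv_subgroup] by blast
  have "(\<Sum>\<chi>\<in>Irr G. \<chi> \<one> * \<chi> g) = (\<Sum>\<chi>\<in>Irr G. of_nat (m \<chi>) * \<chi> g)"
    using m(1) by (intro sum.cong refl) simp
  also have "\<dots> = 0" using m(2)[OF g(1)] fixX_trivial_subgroup[OF g] by simp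
  finally show ?thesis .
qed

lemma Irr_multiplicity_le_degree:
  assumes \<chi>: "\<chi> \<in> Irr G" and K: "subgroup K G" and m: "(\<Sum>k\<in>K. \<chi> k) = of_nat (card K * m)"
  shows "real m \<le> cmod (\<chi> \<one>)"
proof -
  have finK: "finite K" using finite_subset[OF subgroup.subset[OF K] finite_carrier] .
  have "real (card K * m) = cmod (\<Sum>k\<in>K. \<chi> k)" unfolding m by (simp only: norm_of_nat)
  also have "\<dots> \<le> (\<Sum>k\<in>K. cmod (\<chi> \<one>))" using norm_Irr_le[OF \<chi>] by (intro sum_norm_le)
  also have "\<dots> = real (card K) * cmod (\<chi> \<one>)" by simp
  finally have "real (card K) * real m \<le> real (card K) * cmod (\<chi> \<one>)" by simp
  moreover have "card K > 0" using subgroup.one_closed[OF K] finK by (auto simp: card_gt_0_iff)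
  ultimately show ?thesis by (simp add: mult_le_cancel_left_pos)
qed

end

section \<open>The inequalities\<close>

lemma sum_mult_lt_sum_mult_abs:
  fixes m n s :: "'i \<Rightarrow> real"
  assumes fin: "finite I" and m: "\<And>i. i \<in> I \<Longrightarrow> 0 \<le> m i \<and> m i \<le> n i"
    and n: "\<And>i. i \<in> I \<Longrightarrow> 0 < n i" and balanced: "(\<Sum>i\<in>I. n i * s i) = 0"
    and i0: "i0 \<in> I" "s i0 > 0"
  shows "(\<Sum>i\<in>I. m i * s i) < (\<Sum>i\<in>I. n i * \<bar>s i\<bar>)"
proof -
  have "\<exists>i1\<in>I. s i1 < 0"
  proof (rule ccontr)
    assume "\<not> (\<exists>i1\<in>I. s i1 < 0)"
    then have "0 \<le> n i * s i" if "i \<in> I" for i using that n[OF that] by force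
    then have "n i0 * s i0 \<le> (\<Sum>i\<in>I. n i * s i)" by (intro member_le_sum[OF i0(1) _ fin]) blast
    then show False using balanced mult_pos_pos[OF n[OF i0(1)] i0(2)] by linarith
  qed
  then obtain i1 where i1: "i1 \<in> I" "s i1 < 0" by blast
  show ?thesis
  proof (rule sum_strict_mono_ex1[OF fin])
    show "\<forall>i\<in>I. m i * s i \<le> n i * \<bar>s i\<bar>"
    proof
      fix i assume i: "i \<in> I"
      show "m i * s i \<le> n i * \<bar>s i\<bar>"
      proof (cases "s i \<ge> 0")
        case True
        then show ?thesis using m[OF i] by (simp add: mult_right_mono)
      next
        case False
        then have "m i * s i \<le> 0" using m[OF i] by (simp add: mult_nonneg_nonpos)
        also have "0 \<le> n i * \<bar>s i\<bar>" using n[OF i] by simp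
        finally show ?thesis .
      qed
    qed
    have "m i1 * s i1 \<le> 0" using m[OF i1(1)] i1(2) by (simp add: mult_nonneg_nonpos)
    also have "0 < n i1 * \<bar>s i1\<bar>" using n[OF i1(1)] i1(2) by (simp add: mult_pos_neg)
    finally show "\<exists>i\<in>I. m i * s i < n i * \<bar>s i\<bar>" using i1(1) by blast
  qed
qed

context finite_group
begin

lemma sum_nontrivial_eq_of_real:
  assumes \<chi>: "\<chi> \<in> Irr G" and H: "subgroup H G" and m: "(\<Sum>h\<in>H. \<chi> h) = of_nat (card H * m)"
  shows "(\<Sum>h\<in>H - {\<one>}. \<chi> h) = of_real (real (card H * m) - cmod (\<chi> \<one>))"
proof -
  have finH: "finite H" using finite_subset[OF subgroup.subset[OF H] finite_carrier] .
  have "of_nat (card H * m) = \<chi> \<one> + (\<Sum>h\<in>H - {\<one>}. \<chi> h)"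
    using m[symmetric] sum.remove[OF finH subgroup.one_closed[OF H], of \<chi>] by (rule trans)
  then show ?thesis using Irr_one_real[OF \<chi>] by simp
qed

lemma D_eq_sum_abs:
  assumes s: "\<And>\<chi>. \<chi> \<in> Irr G \<Longrightarrow> (\<Sum>h\<in>H - {\<one>}. \<chi> h) = of_real (s \<chi>)"
  shows "D G H = (1 / real (card (carrier G))) * (\<Sum>\<chi>\<in>Irr G. cmod (\<chi> \<one>) * \<bar>s \<chi>\<bar>)"
  unfolding D_def by (simp add: s cong: sum.cong)

lemma sum_fixX_nontrivial_eq:
  assumes H: "subgroup H G"
    and m: "\<And>g. g \<in> carrier G \<Longrightarrow> of_nat (fixX G H g) = (\<Sum>\<chi>\<in>Irr G. of_nat (m \<chi>) * \<chi> g)"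
    and s: "\<And>\<chi>. \<chi> \<in> Irr G \<Longrightarrow> (\<Sum>h\<in>H - {\<one>}. \<chi> h) = of_real (s \<chi>)"
  shows "(\<Sum>h\<in>H - {\<one>}. real (fixX G H h)) = (\<Sum>\<chi>\<in>Irr G. real (m \<chi>) * s \<chi>)"
proof -
  have "complex_of_real (\<Sum>h\<in>H - {\<one>}. real (fixX G H h)) = (\<Sum>h\<in>H - {\<one>}. of_nat (fixX G H h))"
    by simp
  also have "\<dots> = (\<Sum>h\<in>H - {\<one>}. \<Sum>\<chi>\<in>Irr G. of_nat (m \<chi>) * \<chi> h)"
    using m subgroup.subset[OF H] by (intro sum.cong refl) auto
  also have "\<dots> = (\<Sum>\<chi>\<in>Irr G. of_nat (m \<chi>) * (\<Sum>h\<in>H - {\<one>}. \<chi> h))"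
    by (subst sum.swap) (simp only: sum_distrib_left)
  also have "\<dots> = complex_of_real (\<Sum>\<chi>\<in>Irr G. real (m \<chi>) * s \<chi>)"
    by (simp add: s cong: sum.cong)
  finally show ?thesis by (simp only: of_real_eq_iff)
qed

lemma sum_Irr_degree_mult_nontrivial_eq_0:
  assumes H: "subgroup H G"
    and s: "\<And>\<chi>. \<chi> \<in> Irr G \<Longrightarrow> (\<Sum>h\<in>H - {\<one>}. \<chi> h) = of_real (s \<chi>)"
  shows "(\<Sum>\<chi>\<in>Irr G. cmod (\<chi> \<one>) * s \<chi>) = 0"
proof -
  have "complex_of_real (\<Sum>\<chi>\<in>Irr G. cmod (\<chi> \<one>) * s \<chi>) =
      (\<Sum>\<chi>\<in>Irr G. \<chi> \<one> * (\<Sum>h\<in>H - {\<one>}. \<chi> h))"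
    by (simp add: s Irr_one_real cong: sum.cong)
  also have "\<dots> = (\<Sum>h\<in>H - {\<one>}. \<Sum>\<chi>\<in>Irr G. \<chi> \<one> * \<chi> h)"
    by (simp only: sum_distrib_left) (rule sum.swap)
  also have "\<dots> = 0"
    using sum_Irr_degree_mult_eq_0 subgroup.subset[OF H] by (intro sum.neutral) auto
  finally show ?thesis by (simp only: of_real_eq_0_iff)
qed

lemma fixX_sum_lt_D:
  assumes H: "subgroup H G" and Hne: "H \<noteq> {\<one>}"
  shows "(1 / real (card (carrier G))) * (\<Sum>h\<in>H - {\<one>}. real (fixX G H h)) < D G H"
proof -
  have Hc: "H \<subseteq> carrier G" using subgroup.subset[OF H] .
  have finH: "finite H" using finite_subset[OF Hc finite_carrier] .
  have oneH: "\<one> \<in> H" using subgroup.one_closed[OF H] .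
  obtain m where m: "\<And>\<chi>. \<chi> \<in> Irr G \<Longrightarrow> (\<Sum>h\<in>H. \<chi> h) = of_nat (card H * m \<chi>)"
      "\<And>g. g \<in> carrier G \<Longrightarrow> of_nat (fixX G H g) = (\<Sum>\<chi>\<in>Irr G. of_nat (m \<chi>) * \<chi> g)"
    using fixX_decomposition[OF H] by blast
  define s where "s \<chi> = real (card H * m \<chi>) - cmod (\<chi> \<one>)" for \<chi>
  have s: "(\<Sum>h\<in>H - {\<one>}. \<chi> h) = of_real (s \<chi>)" if "\<chi> \<in> Irr G" for \<chi>
    unfolding s_def using sum_nontrivial_eq_of_real[OF that H m(1)[OF that]] .
  let ?\<tau> = "character G (\<lambda>_. 1\<^sub>m 1)"
  have "(\<Sum>h\<in>H - {\<one>}. ?\<tau> h) = (\<Sum>h\<in>H - {\<one>}. 1)"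
    using Hc by (intro sum.cong refl) (auto simp: character_def)
  then have "of_real (s ?\<tau>) = (of_nat (card (H - {\<one>})) :: complex)"
    using s[OF trivial_character_in_Irr] by simp
  then have "s ?\<tau> = card (H - {\<one>})" by (metis of_real_eq_iff of_real_of_nat_eq)
  moreover have "H - {\<one>} \<noteq> {}" using Hne oneH by blast
  ultimately have "s ?\<tau> > 0" using finH by (simp add: card_gt_0_iff)
  have "(\<Sum>\<chi>\<in>Irr G. real (m \<chi>) * s \<chi>) < (\<Sum>\<chi>\<in>Irr G. cmod (\<chi> \<one>) * \<bar>s \<chi>\<bar>)"
  proof (rule sum_mult_lt_sum_mult_abs)
    show "finite (Irr G)" by (rule finite_Irr)
    show "(\<Sum>\<chi>\<in>Irr G. cmod (\<chi> \<one>) * s \<chi>) = 0"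
      using sum_Irr_degree_mult_nontrivial_eq_0[OF H s] .
    show "?\<tau> \<in> Irr G" by (rule trivial_character_in_Irr)
    show "s ?\<tau> > 0" by fact
  next
    fix \<chi> assume \<chi>: "\<chi> \<in> Irr G"
    show "0 \<le> real (m \<chi>) \<and> real (m \<chi>) \<le> cmod (\<chi> \<one>)"
      using Irr_multiplicity_le_degree[OF \<chi> H m(1)[OF \<chi>]] by simp
    show "0 < cmod (\<chi> \<one>)" using Irr_one_ge[OF \<chi>] by linarith
  qed
  moreover have "D G H = (1 / real (card (carrier G))) * (\<Sum>\<chi>\<in>Irr G. cmod (\<chi> \<one>) * \<bar>s \<chi>\<bar>)"
    by (rule D_eq_sum_abs[OF s])
  moreover have "(\<Sum>h\<in>H - {\<one>}. real (fixX G H h)) = (\<Sum>\<chi>\<in>Irr G. real (m \<chi>) * s \<chi>)"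
    by (rule sum_fixX_nontrivial_eq[OF H m(2) s])
  ultimately show ?thesis using card_carrier_pos by (simp add: divide_strict_right_mono)
qed

lemma rX_ratio_eq:
  assumes H: "subgroup H G"
  shows "real (rX G H) / real (card (rcosets H)) - 1 / real (card H) =
    (1 / real (card (carrier G))) * (\<Sum>h\<in>H - {\<one>}. real (fixX G H h))"
proof -
  have finH: "finite H" using finite_subset[OF subgroup.subset[OF H] finite_carrier] .
  have lag: "card (rcosets H) * card H = card (carrier G)"
    using lagrange[OF H] unfolding Coset.order_def .
  have eq: "rX G H * card H = card (rcosets H) + (\<Sum>h\<in>H - {\<one>}. fixX G H h)"
    using rX_mult_card_eq_sum_fixX[OF H] sum.remove[OF finH subgroup.one_closed[OF H], of "fixX G H"]
      fixX_one[OF H] by simp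
  have "real (rX G H) * real (card H) =
      real (card (rcosets H)) + (\<Sum>h\<in>H - {\<one>}. real (fixX G H h))"
    using arg_cong[OF eq, of real] by simp
  moreover have "card (rcosets H) > 0" "card H > 0"
    using lag card_carrier_pos by (cases "card (rcosets H) = 0"; cases "card H = 0"; simp)+
  ultimately show ?thesis unfolding lag[symmetric] by (simp add: field_simps)
qed

end

theorem corollary2:
  fixes G :: "('a, 'b) monoid_scheme" and H :: "'a set"
  assumes "group G" and "finite (carrier G)" and "subgroup H G"
    and "H \<noteq> {\<one>\<^bsub>G\<^esub>}"
  shows "D G H > (1 / real (card (carrier G))) * (\<Sum>h \<in> H - {\<one>\<^bsub>G\<^esub>}. real (fixX G H h))
       \<and> D G H > real (rX G H) / real (card (rcosets\<^bsub>G\<^esub> H)) - 1 / real (card H)"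
proof -
  interpret finite_group G
    using assms(1,2) by (simp add: finite_group_def finite_group_axioms_def)
  show ?thesis using fixX_sum_lt_D[OF assms(3,4)] rX_ratio_eq[OF assms(3)] by simp
qed

end
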